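(* Let $k\geq 3$ and $n\geq 3$ be odd integers and let $G$ be a connected graph of order $n$. If $\lambda_1(D(G))\le \lambda_1(D(K_1\vee(K_{n-2}\cup K_1)))$, then $G$ is $\mathrm{GFC}_k$ unless $G\cong K_1\vee(K_{n-2}\cup K_1)$.
   Context: All graphs are finite, simple, undirected. For a connected graph $G$, $D(G)$ is its distance matrix (entry $(i,j)$ is the distance between $v_i$ and $v_j$) and $\lambda_1(D(G))$ its largest eigenvalue. $G\cup H$ is disjoint union, $G\vee H$ the join, $tK_1$ the edgeless graph on $t$ vertices. For a graph $H$, $i(H)$ is the number of isolated vertices of $H$ and $\mathrm{odd}(H)$ the number of components of $H$ with an odd number ($\ge 3$) of vertices, i.e. nontrivial odd components. The $k$-Berge–Tutte formula is $\mathrm{def}_k(G)=\max_{S\subseteq V(G)} \big(k\, i(G-S)-k|S|\big)$ if $k$ is even, and $\max_{S\subseteq V(G)}\big(\mathrm{odd}(G-S)+k\, i(G-S)-k|S|\big)$ if $k$ is odd; a set $S$ attaining the maximum is a $k$-barrier. A connected graph of odd order is $\mathrm{GFC}_k$ (generalized factor-critical about integer $k$-matching) if it has no non-empty $k$-barrier. *)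

theory Defs
  imports Complex_Main
begin

definition simple_graph :: "'a set \<Rightarrow> ('a \<Rightarrow> 'a \<Rightarrow> bool) \<Rightarrow> bool" where
  "simple_graph V E \<longleftrightarrow> finite V \<and>
     (\<forall>u v. E u v \<longrightarrow> u \<in> V \<and> v \<in> V \<and> u \<noteq> v) \<and>
     (\<forall>u v. E u v \<longrightarrow> E v u)"

text \<open>A walk in the graph (V,E): a nonempty list of vertices of V, consecutive
ones adjacent. Its length is the number of edges, i.e. length xs - 1.\<close>

definition walk :: "'a set \<Rightarrow> ('a \<Rightarrow> 'a \<Rightarrow> bool) \<Rightarrow> 'a list \<Rightarrow> bool" where
  "walk V E xs \<longleftrightarrow> xs \<noteq> [] \<and> set xs \<subseteq> V \<and>
     (\<forall>i. Suc i < length xs \<longrightarrow> E (xs ! i) (xs ! Suc i))"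

definition reachable :: "'a set \<Rightarrow> ('a \<Rightarrow> 'a \<Rightarrow> bool) \<Rightarrow> 'a \<Rightarrow> 'a \<Rightarrow> bool" where
  "reachable V E u v \<longleftrightarrow> (\<exists>xs. walk V E xs \<and> hd xs = u \<and> last xs = v)"

definition connected_graph :: "'a set \<Rightarrow> ('a \<Rightarrow> 'a \<Rightarrow> bool) \<Rightarrow> bool" where
  "connected_graph V E \<longleftrightarrow> V \<noteq> {} \<and> (\<forall>u\<in>V. \<forall>v\<in>V. reachable V E u v)"

definition gdist :: "'a set \<Rightarrow> ('a \<Rightarrow> 'a \<Rightarrow> bool) \<Rightarrow> 'a \<Rightarrow> 'a \<Rightarrow> nat" where
  "gdist V E u v = (LEAST k. \<exists>xs. walk V E xs \<and> hd xs = u \<and> last xs = v \<and> length xs = Suc k)"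

definition dist_matrix :: "'a set \<Rightarrow> ('a \<Rightarrow> 'a \<Rightarrow> bool) \<Rightarrow> 'a \<Rightarrow> 'a \<Rightarrow> real" where
  "dist_matrix V E u v = real (gdist V E u v)"

definition is_eigenvalue :: "'a set \<Rightarrow> ('a \<Rightarrow> 'a \<Rightarrow> real) \<Rightarrow> real \<Rightarrow> bool" where
  "is_eigenvalue V M \<mu> \<longleftrightarrow> (\<exists>x :: 'a \<Rightarrow> real. (\<exists>i\<in>V. x i \<noteq> 0) \<and>
      (\<forall>i\<in>V. (\<Sum>j\<in>V. M i j * x j) = \<mu> * x i))"

text \<open>Largest eigenvalue \<lambda>_1 (the distance matrix is real symmetric, so all its
eigenvalues are real).\<close>

definition lambda1 :: "'a set \<Rightarrow> ('a \<Rightarrow> 'a \<Rightarrow> real) \<Rightarrow> real" where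
  "lambda1 V M = Max {\<mu>. is_eigenvalue V M \<mu>}"

definition distance_spectral_radius :: "'a set \<Rightarrow> ('a \<Rightarrow> 'a \<Rightarrow> bool) \<Rightarrow> real" where
  "distance_spectral_radius V E = lambda1 V (dist_matrix V E)"

definition del_vertices :: "('a \<Rightarrow> 'a \<Rightarrow> bool) \<Rightarrow> 'a set \<Rightarrow> 'a \<Rightarrow> 'a \<Rightarrow> bool" where
  "del_vertices E S u v \<longleftrightarrow> E u v \<and> u \<notin> S \<and> v \<notin> S"

definition components :: "'a set \<Rightarrow> ('a \<Rightarrow> 'a \<Rightarrow> bool) \<Rightarrow> 'a set set" where
  "components V E = (\<lambda>v. {u \<in> V. reachable V E v u}) ` V"

definition num_isolated :: "'a set \<Rightarrow> ('a \<Rightarrow> 'a \<Rightarrow> bool) \<Rightarrow> nat" where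
  "num_isolated V E = card {C \<in> components V E. card C = 1}"

definition num_odd_nontrivial :: "'a set \<Rightarrow> ('a \<Rightarrow> 'a \<Rightarrow> bool) \<Rightarrow> nat" where
  "num_odd_nontrivial V E = card {C \<in> components V E. odd (card C) \<and> card C \<ge> 3}"

text \<open>The quantity maximised in the k-Berge--Tutte formula for a given S.\<close>

definition bt_value :: "nat \<Rightarrow> 'a set \<Rightarrow> ('a \<Rightarrow> 'a \<Rightarrow> bool) \<Rightarrow> 'a set \<Rightarrow> int" where
  "bt_value k V E S =
     (if even k
      then int k * int (num_isolated (V - S) (del_vertices E S)) - int k * int (card S)
      else int (num_odd_nontrivial (V - S) (del_vertices E S))
           + int k * int (num_isolated (V - S) (del_vertices E S)) - int k * int (card S))"

definition def_k :: "nat \<Rightarrow> 'a set \<Rightarrow> ('a \<Rightarrow> 'a \<Rightarrow> bool) \<Rightarrow> int" where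
  "def_k k V E = Max (bt_value k V E ` Pow V)"

definition k_barrier :: "nat \<Rightarrow> 'a set \<Rightarrow> ('a \<Rightarrow> 'a \<Rightarrow> bool) \<Rightarrow> 'a set \<Rightarrow> bool" where
  "k_barrier k V E S \<longleftrightarrow> S \<subseteq> V \<and> bt_value k V E S = def_k k V E"

definition GFC :: "nat \<Rightarrow> 'a set \<Rightarrow> ('a \<Rightarrow> 'a \<Rightarrow> bool) \<Rightarrow> bool" where
  "GFC k V E \<longleftrightarrow> connected_graph V E \<and> odd (card V) \<and>
     \<not> (\<exists>S. S \<noteq> {} \<and> k_barrier k V E S)"

definition graph_iso :: "'a set \<Rightarrow> ('a \<Rightarrow> 'a \<Rightarrow> bool) \<Rightarrow> 'b set \<Rightarrow> ('b \<Rightarrow> 'b \<Rightarrow> bool) \<Rightarrow> bool" where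
  "graph_iso V E W F \<longleftrightarrow> (\<exists>f. bij_betw f V W \<and> (\<forall>u\<in>V. \<forall>v\<in>V. E u v \<longleftrightarrow> F (f u) (f v)))"

text \<open>K_1 \<or> (K_{n-2} \<union> K_1) on vertex set {0..<n}: vertex 0 is the joined K_1,
vertices 1..n-2 form K_{n-2}, vertex n-1 is the other K_1.\<close>

definition special_graph :: "nat \<Rightarrow> nat \<Rightarrow> nat \<Rightarrow> bool" where
  "special_graph n u v \<longleftrightarrow> u < n \<and> v < n \<and> u \<noteq> v \<and>
     (u = 0 \<or> v = 0 \<or> (1 \<le> u \<and> u \<le> n - 2 \<and> 1 \<le> v \<and> v \<le> n - 2))"

end

theory Submission
  imports Defs "HOL-Analysis.Analysis" "Jordan_Normal_Form.Char_Poly"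
begin

text \<open>Let S be a nonempty k-barrier of a graph G that is not GFC_k, and let
H = K_1 \<or> (K_{n-2} \<union> K_1). Comparing S with the empty set, whose value is 1, gives
odd(G - S) + k i(G - S) - k |S| \<ge> 1. Hence either G - S has |S| isolated vertices, or,
since k \<ge> 3, it has a nontrivial odd component C with at least |S| + 1 vertices outside
S \<union> C. Either way many pairs of vertices are non-adjacent and so at distance at least 2.
Transplanting the Perron vector of D(H) to G (its value a on a vertex of S, b on an isolated
vertex or on C, and the common clique value y elsewhere) then yields a Rayleigh quotient of
D(G) above \<lambda>_1(D(H)), unless |S| = 1 and G is a copy of H. For n = 5 and |S| = 2 the
vector (1, 1, 3/2, 3/2, 3/2) is used instead.\<close>

section \<open>Rayleigh quotients of symmetric matrices\<close>

definition quad_form :: "'a set \<Rightarrow> ('a \<Rightarrow> 'a \<Rightarrow> real) \<Rightarrow> ('a \<Rightarrow> real) \<Rightarrow> real" where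
  "quad_form V M x = (\<Sum>i\<in>V. \<Sum>j\<in>V. M i j * x i * x j)"

definition sq_norm :: "'a set \<Rightarrow> ('a \<Rightarrow> real) \<Rightarrow> real" where
  "sq_norm V x = (\<Sum>i\<in>V. (x i)\<^sup>2)"

lemma quad_form_cong: "(\<And>i. i \<in> V \<Longrightarrow> x i = y i) \<Longrightarrow> quad_form V M x = quad_form V M y"
  unfolding quad_form_def by (intro sum.cong refl) auto

lemma sq_norm_cong: "(\<And>i. i \<in> V \<Longrightarrow> x i = y i) \<Longrightarrow> sq_norm V x = sq_norm V y"
  unfolding sq_norm_def by (intro sum.cong refl) auto

lemma quad_form_scale: "quad_form V M (\<lambda>i. c * x i) = c\<^sup>2 * quad_form V M x"
  unfolding quad_form_def by (simp add: sum_distrib_left power2_eq_square algebra_simps)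

lemma sq_norm_scale: "sq_norm V (\<lambda>i. c * x i) = c\<^sup>2 * sq_norm V x"
  unfolding sq_norm_def by (simp add: sum_distrib_left power2_eq_square algebra_simps)

lemma sq_norm_nonneg: "sq_norm V x \<ge> 0"
  unfolding sq_norm_def by (simp add: sum_nonneg)

lemma sq_norm_pos:
  assumes "finite V" "i \<in> V" "x i \<noteq> 0"
  shows "sq_norm V x > 0"
  unfolding sq_norm_def using assms by (intro sum_pos2[of V i]) auto

lemma sq_norm_eq_0_iff:
  assumes "finite V"
  shows "sq_norm V x = 0 \<longleftrightarrow> (\<forall>i\<in>V. x i = 0)"
  unfolding sq_norm_def using assms by (simp add: sum_nonneg_eq_0_iff)

lemma quad_form_eigenvector:
  assumes "\<forall>i\<in>V. (\<Sum>j\<in>V. M i j * x j) = \<mu> * x i"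
  shows "quad_form V M x = \<mu> * sq_norm V x"
proof -
  have "quad_form V M x = (\<Sum>i\<in>V. x i * (\<Sum>j\<in>V. M i j * x j))"
    unfolding quad_form_def by (simp add: sum_distrib_left algebra_simps)
  also have "\<dots> = (\<Sum>i\<in>V. \<mu> * (x i)\<^sup>2)"
    using assms by (intro sum.cong) (auto simp: power2_eq_square)
  finally show ?thesis
    by (simp add: sq_norm_def sum_distrib_left)
qed

lemma eigenvalue_mat_of_is_eigenvalue:
  assumes f: "bij_betw f {0..<n} V" and "is_eigenvalue V M \<mu>"
  shows "eigenvalue (mat n n (\<lambda>(i, j). M (f i) (f j))) \<mu>"
proof -
  obtain x where x: "\<exists>i\<in>V. x i \<noteq> 0" and ev: "\<forall>i\<in>V. (\<Sum>j\<in>V. M i j * x j) = \<mu> * x i"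
    using assms(2) unfolding is_eigenvalue_def by blast
  define v :: "real vec" where "v = vec n (\<lambda>i. x (f i))"
  have "v \<noteq> 0\<^sub>v n"
  proof
    assume v0: "v = 0\<^sub>v n"
    obtain i where i: "i \<in> V" "x i \<noteq> 0"
      using x by blast
    then obtain j where j: "j < n" "f j = i"
      using f unfolding bij_betw_def by (metis atLeastLessThan_iff imageE)
    have "v $ j = 0"
      using v0 j by simp
    then show False
      using i j unfolding v_def by simp
  qed
  moreover have "mat n n (\<lambda>(i, j). M (f i) (f j)) *\<^sub>v v = \<mu> \<cdot>\<^sub>v v"
  proof (rule eq_vecI)
    fix i assume "i < dim_vec (\<mu> \<cdot>\<^sub>v v)"
    then have i: "i < n"
      unfolding v_def by simp
    have "(mat n n (\<lambda>(i, j). M (f i) (f j)) *\<^sub>v v) $ i = (\<Sum>j = 0..<n. M (f i) (f j) * x (f j))"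
      using i unfolding v_def mult_mat_vec_def scalar_prod_def by simp
    also have "\<dots> = (\<Sum>u\<in>V. M (f i) u * x u)"
      using sum.reindex_bij_betw[OF f, of "\<lambda>u. M (f i) u * x u"] by simp
    also have "\<dots> = \<mu> * x (f i)"
      using ev f i unfolding bij_betw_def by auto
    finally show "(mat n n (\<lambda>(i, j). M (f i) (f j)) *\<^sub>v v) $ i = (\<mu> \<cdot>\<^sub>v v) $ i"
      using i unfolding v_def by simp
  qed (simp add: v_def)
  moreover have "v \<in> carrier_vec n"
    unfolding v_def by simp
  ultimately show ?thesis
    unfolding eigenvalue_def eigenvector_def by auto
qed

lemma finite_eigenvalues:
  assumes "finite V"
  shows "finite {\<mu>. is_eigenvalue V M \<mu>}"
proof -
  obtain f where f: "bij_betw f {0..<card V} V"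
    using ex_bij_betw_nat_finite[OF assms] by blast
  define A :: "real mat" where "A = mat (card V) (card V) (\<lambda>(i, j). M (f i) (f j))"
  have A: "A \<in> carrier_mat (card V) (card V)"
    unfolding A_def by simp
  have "{\<mu>. is_eigenvalue V M \<mu>} \<subseteq> {\<mu>. poly (char_poly A) \<mu> = 0}"
    using eigenvalue_mat_of_is_eigenvalue[OF f] eigenvalue_root_char_poly[OF A]
    unfolding A_def by auto
  moreover have "char_poly A \<noteq> 0"
    using degree_monic_char_poly[OF A] by auto
  ultimately show ?thesis
    using poly_roots_finite finite_subset by blast
qed

lemma quad_form_max_on_unit_sphere:
  assumes "finite V" "V \<noteq> {}"
  obtains x where "sq_norm V x = 1" "\<And>y. sq_norm V y = 1 \<Longrightarrow> quad_form V M y \<le> quad_form V M x"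
proof -
  define K :: "('a \<Rightarrow> real) set" where "K = PiE UNIV (\<lambda>i. if i \<in> V then {-1..1} else {0})"
  have "compactin (product_topology (\<lambda>i. euclidean) UNIV) K"
    unfolding K_def by (subst compactin_PiE) (auto simp: compactin_euclidean_iff)
  then have "compact K"
    by (simp add: euclidean_product_topology compactin_euclidean_iff)
  moreover have "closed {x :: 'a \<Rightarrow> real. sq_norm V x = 1}"
    unfolding sq_norm_def
    by (intro closed_Collect_eq continuous_intros continuous_on_product_coordinates)
  ultimately have compact_sphere: "compact (K \<inter> {x. sq_norm V x = 1})"
    by (rule compact_Int_closed)
  obtain v where v: "v \<in> V"
    using assms by blast
  have "sq_norm V (\<lambda>i. if i = v then 1 else 0) = (\<Sum>i\<in>V. if i = v then 1 else 0)"
    unfolding sq_norm_def by (rule sum.cong) auto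
  then have "(\<lambda>i. if i = v then 1 else 0) \<in> K \<inter> {x. sq_norm V x = 1}"
    unfolding K_def using v assms(1) by (auto simp: PiE_UNIV_domain)
  moreover have "continuous_on (K \<inter> {x. sq_norm V x = 1}) (quad_form V M)"
    unfolding quad_form_def
    by (intro continuous_intros continuous_on_subset[OF continuous_on_product_coordinates subset_UNIV])
  ultimately obtain x where x: "x \<in> K" "sq_norm V x = 1"
    and x_max: "\<And>y. y \<in> K \<Longrightarrow> sq_norm V y = 1 \<Longrightarrow> quad_form V M y \<le> quad_form V M x"
    using continuous_attains_sup[OF compact_sphere] by blast
  have "quad_form V M y \<le> quad_form V M x" if y: "sq_norm V y = 1" for y
  proof -
    define y' where "y' = (\<lambda>i. if i \<in> V then y i else 0)"
    have "\<bar>y i\<bar> \<le> 1" if "i \<in> V" for i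
    proof -
      have "(y i)\<^sup>2 \<le> 1"
        using y assms(1) that unfolding sq_norm_def by (metis member_le_sum zero_le_power2)
      then show ?thesis
        using abs_le_square_iff[of "y i" 1] by simp
    qed
    then have "y' \<in> K"
      unfolding K_def y'_def by (auto simp: PiE_UNIV_domain abs_le_iff)
    moreover have "sq_norm V y' = 1" "quad_form V M y' = quad_form V M y"
      using y sq_norm_cong[of V y' y] quad_form_cong[of V y' y] unfolding y'_def by auto
    ultimately show ?thesis
      using x_max by metis
  qed
  then show ?thesis
    using that x(2) by blast
qed

lemma rayleigh_max_attained:
  assumes "finite V" "V \<noteq> {}"
  obtains \<mu> x where "\<forall>z. quad_form V M z \<le> \<mu> * sq_norm V z" "sq_norm V x = 1" "quad_form V M x = \<mu>"
proof -
  obtain x where x: "sq_norm V x = 1"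
    and x_max: "\<And>y. sq_norm V y = 1 \<Longrightarrow> quad_form V M y \<le> quad_form V M x"
    using quad_form_max_on_unit_sphere[OF assms] by blast
  have "quad_form V M z \<le> quad_form V M x * sq_norm V z" for z
  proof (cases "sq_norm V z = 0")
    case True
    then have "quad_form V M z = quad_form V M (\<lambda>i. 0 * z i)"
      using sq_norm_eq_0_iff[OF assms(1)] by (intro quad_form_cong) auto
    then show ?thesis
      using True by (simp add: quad_form_def)
  next
    case False
    then have pos: "sq_norm V z > 0"
      using sq_norm_nonneg[of V z] by linarith
    define c where "c = 1 / sqrt (sq_norm V z)"
    have c2: "c\<^sup>2 = 1 / sq_norm V z"
      unfolding c_def using pos by (simp add: power_divide)
    then have "sq_norm V (\<lambda>i. c * z i) = 1"
      using pos by (simp add: sq_norm_scale)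
    then have "c\<^sup>2 * quad_form V M z \<le> quad_form V M x"
      using x_max[of "\<lambda>i. c * z i"] by (simp add: quad_form_scale)
    then show ?thesis
      using c2 pos by (simp add: field_simps)
  qed
  then show ?thesis
    using that x by blast
qed

lemma quadratic_nonpos_imp_linear_eq_0:
  fixes L Q :: real
  assumes "\<And>t. 2 * t * L + t\<^sup>2 * Q \<le> 0"
  shows "L = 0"
proof (rule ccontr)
  assume "L \<noteq> 0"
  define t where "t = L / (\<bar>Q\<bar> + 1)"
  have t: "t * (\<bar>Q\<bar> + 1) = L"
    unfolding t_def by (simp add: add_pos_nonneg)
  have "L\<^sup>2 * (\<bar>Q\<bar> + 2)
      = 2 * (\<bar>Q\<bar> + 1) * (t * (\<bar>Q\<bar> + 1)) * L - (t * (\<bar>Q\<bar> + 1))\<^sup>2 * \<bar>Q\<bar>"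
    unfolding t by (simp add: algebra_simps power2_eq_square)
  also have "\<dots> = (\<bar>Q\<bar> + 1)\<^sup>2 * (2 * t * L - t\<^sup>2 * \<bar>Q\<bar>)"
    by (simp add: algebra_simps power2_eq_square)
  also have "\<dots> \<le> (\<bar>Q\<bar> + 1)\<^sup>2 * (2 * t * L + t\<^sup>2 * Q)"
    using mult_left_mono[of "- \<bar>Q\<bar>" Q "t\<^sup>2"] by (intro mult_left_mono) auto
  also have "\<dots> \<le> 0"
    using assms[of t] by (simp add: mult_nonneg_nonpos)
  finally have "L\<^sup>2 * (\<bar>Q\<bar> + 2) \<le> 0" .
  moreover have "L\<^sup>2 * (\<bar>Q\<bar> + 2) > 0"
    using \<open>L \<noteq> 0\<close> by (intro mult_pos_pos) auto
  ultimately show False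
    by simp
qed

lemma quad_form_add_coordinate:
  assumes "finite V" "i \<in> V" and sym: "\<forall>a\<in>V. \<forall>b\<in>V. M a b = M b a"
  shows "quad_form V M (\<lambda>j. x j + (if j = i then t else 0)) =
         quad_form V M x + 2 * t * (\<Sum>j\<in>V. M i j * x j) + t\<^sup>2 * M i i"
proof -
  let ?d = "\<lambda>j. if j = i then t else 0"
  have expand: "M k j * (x k + ?d k) * (x j + ?d j) =
      M k j * x k * x j + M k j * ?d k * x j + M k j * x k * ?d j + M k j * ?d k * ?d j" for k j
    by (simp add: algebra_simps)
  have row: "(\<Sum>k\<in>V. \<Sum>j\<in>V. M k j * ?d k * x j) = t * (\<Sum>j\<in>V. M i j * x j)"
  proof -
    have "(\<Sum>k\<in>V. \<Sum>j\<in>V. M k j * ?d k * x j) = (\<Sum>k\<in>V. if k = i then (\<Sum>j\<in>V. M i j * t * x j) else 0)"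
      by (rule sum.cong) auto
    then show ?thesis
      using assms(1,2) by (simp add: sum_distrib_left algebra_simps)
  qed
  have column: "(\<Sum>k\<in>V. \<Sum>j\<in>V. M k j * x k * ?d j) = t * (\<Sum>j\<in>V. M i j * x j)"
  proof -
    have "(\<Sum>k\<in>V. \<Sum>j\<in>V. M k j * x k * ?d j) = (\<Sum>k\<in>V. M i k * x k * t)"
      using assms by (intro sum.cong) (auto simp: if_distrib cong: if_cong)
    then show ?thesis
      by (simp add: sum_distrib_left algebra_simps)
  qed
  have diagonal: "(\<Sum>k\<in>V. \<Sum>j\<in>V. M k j * ?d k * ?d j) = t\<^sup>2 * M i i"
  proof -
    have "(\<Sum>k\<in>V. \<Sum>j\<in>V. M k j * ?d k * ?d j) = (\<Sum>k\<in>V. if k = i then M i i * t * t else 0)"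
      using assms(1,2) by (intro sum.cong) (auto simp: if_distrib cong: if_cong)
    then show ?thesis
      using assms(1,2) by (simp add: power2_eq_square)
  qed
  show ?thesis
    unfolding quad_form_def by (simp only: expand sum.distrib row column diagonal)
qed

lemma sq_norm_add_coordinate:
  assumes "finite V" "i \<in> V"
  shows "sq_norm V (\<lambda>j. x j + (if j = i then t else 0)) = sq_norm V x + 2 * t * x i + t\<^sup>2"
proof -
  have "sq_norm V (\<lambda>j. x j + (if j = i then t else 0))
      = (\<Sum>j\<in>V. (x j)\<^sup>2 + (if j = i then 2 * t * x i + t\<^sup>2 else 0))"
    unfolding sq_norm_def by (rule sum.cong) (auto simp: power2_eq_square algebra_simps)
  then show ?thesis
    using assms by (simp add: sum.distrib sq_norm_def)
qed

text \<open>Moving coordinate i of x by t changes the quotient by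
2 t ((M x)_i - \<mu> x_i) up to O(t^2); maximality forces the linear term to vanish.\<close>

lemma rayleigh_maximiser_eigenvector:
  assumes "finite V" and sym: "\<forall>a\<in>V. \<forall>b\<in>V. M a b = M b a"
    and ub: "\<forall>z. quad_form V M z \<le> \<mu> * sq_norm V z" and eq: "quad_form V M x = \<mu> * sq_norm V x"
  shows "\<forall>i\<in>V. (\<Sum>j\<in>V. M i j * x j) = \<mu> * x i"
proof
  fix i assume i: "i \<in> V"
  have "2 * t * ((\<Sum>j\<in>V. M i j * x j) - \<mu> * x i) + t\<^sup>2 * (M i i - \<mu>) \<le> 0" for t
    using ub[rule_format, of "\<lambda>j. x j + (if j = i then t else 0)"] eq
    unfolding quad_form_add_coordinate[OF assms(1) i sym] sq_norm_add_coordinate[OF assms(1) i]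
    by (simp add: algebra_simps)
  then have "(\<Sum>j\<in>V. M i j * x j) - \<mu> * x i = 0"
    by (rule quadratic_nonpos_imp_linear_eq_0)
  then show "(\<Sum>j\<in>V. M i j * x j) = \<mu> * x i"
    by simp
qed

lemma lambda1_eq_rayleigh_max:
  assumes "finite V" and sym: "\<forall>a\<in>V. \<forall>b\<in>V. M a b = M b a"
    and ub: "\<forall>z. quad_form V M z \<le> \<mu> * sq_norm V z"
    and x: "sq_norm V x = 1" "quad_form V M x = \<mu>"
  shows "lambda1 V M = \<mu>"
  unfolding lambda1_def
proof (rule Max_eqI[OF finite_eigenvalues[OF assms(1)]])
  have "\<exists>i\<in>V. x i \<noteq> 0"
    using x(1) sq_norm_eq_0_iff[OF assms(1), of x] by auto
  then show "\<mu> \<in> {\<mu>. is_eigenvalue V M \<mu>}"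
    unfolding is_eigenvalue_def using rayleigh_maximiser_eigenvector[OF assms(1) sym ub] x by auto
next
  fix \<nu> assume "\<nu> \<in> {\<mu>. is_eigenvalue V M \<mu>}"
  then obtain z i where z: "i \<in> V" "z i \<noteq> 0" "\<forall>i\<in>V. (\<Sum>j\<in>V. M i j * z j) = \<nu> * z i"
    unfolding is_eigenvalue_def by blast
  have "\<nu> * sq_norm V z \<le> \<mu> * sq_norm V z"
    using ub quad_form_eigenvector[OF z(3)] by metis
  then show "\<nu> \<le> \<mu>"
    using sq_norm_pos[of V i z] assms(1) z(1,2) by simp
qed

lemma rayleigh_le_lambda1:
  assumes "finite V" "V \<noteq> {}" "\<forall>a\<in>V. \<forall>b\<in>V. M a b = M b a"
  shows "quad_form V M z \<le> lambda1 V M * sq_norm V z"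
  using rayleigh_max_attained[OF assms(1,2)] lambda1_eq_rayleigh_max[OF assms(1,3)] by metis

text \<open>A weak form of Perron--Frobenius: replacing a maximiser x by
its absolute value |x| cannot decrease the quadratic form of a nonnegative matrix.\<close>

lemma lambda1_nonneg_eigenvector:
  assumes "finite V" "V \<noteq> {}" and sym: "\<forall>a\<in>V. \<forall>b\<in>V. M a b = M b a"
    and nonneg: "\<forall>i\<in>V. \<forall>j\<in>V. M i j \<ge> 0"
  obtains x where "\<forall>i. x i \<ge> 0" "sq_norm V x = 1"
    "\<forall>i\<in>V. (\<Sum>j\<in>V. M i j * x j) = lambda1 V M * x i"
proof -
  obtain \<mu> x where ub: "\<forall>z. quad_form V M z \<le> \<mu> * sq_norm V z"
    and x: "sq_norm V x = 1" "quad_form V M x = \<mu>"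
    using rayleigh_max_attained[OF assms(1,2)] by blast
  define y where "y = (\<lambda>i. \<bar>x i\<bar>)"
  have y_norm: "sq_norm V y = 1"
    using x(1) unfolding sq_norm_def y_def by simp
  have "quad_form V M x \<le> quad_form V M y"
    unfolding quad_form_def y_def
  proof (intro sum_mono)
    fix i j assume "i \<in> V" "j \<in> V"
    then have "M i j * (x i * x j) \<le> M i j * (\<bar>x i\<bar> * \<bar>x j\<bar>)"
      using nonneg by (intro mult_left_mono) (auto simp flip: abs_mult)
    then show "M i j * x i * x j \<le> M i j * \<bar>x i\<bar> * \<bar>x j\<bar>"
      by (simp add: mult.assoc)
  qed
  then have "quad_form V M y = \<mu> * sq_norm V y"
    using ub[rule_format, of y] x y_norm by simp
  then have "\<forall>i\<in>V. (\<Sum>j\<in>V. M i j * y j) = \<mu> * y i"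
    by (rule rayleigh_maximiser_eigenvector[OF assms(1) sym ub])
  moreover have "lambda1 V M = \<mu>"
    by (rule lambda1_eq_rayleigh_max[OF assms(1) sym ub x])
  ultimately show ?thesis
    using that[of y] y_norm by (simp add: y_def)
qed

section \<open>Walks, distances and components\<close>

lemma walk_rev:
  assumes sym: "\<forall>u v. E u v \<longrightarrow> E v u" and w: "walk V E xs"
  shows "walk V E (rev xs)"
  unfolding walk_def
proof (intro conjI allI impI)
  show "rev xs \<noteq> []" "set (rev xs) \<subseteq> V"
    using w unfolding walk_def by auto
  fix i assume i: "Suc i < length (rev xs)"
  define j where "j = length xs - Suc (Suc i)"
  have "E (xs ! j) (xs ! Suc j)"
    using w i unfolding walk_def j_def by auto
  moreover have "rev xs ! i = xs ! Suc j" "rev xs ! Suc i = xs ! j"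
    using i by (auto simp: rev_nth j_def Suc_diff_Suc)
  ultimately show "E (rev xs ! i) (rev xs ! Suc i)"
    using sym by simp
qed

lemma walk_append:
  assumes xs: "walk V E xs" and ys: "walk V E ys" and join: "last xs = hd ys"
  shows "walk V E (xs @ tl ys)"
  unfolding walk_def
proof (intro conjI allI impI)
  have ne: "xs \<noteq> []" "ys \<noteq> []"
    using xs ys unfolding walk_def by auto
  show "xs @ tl ys \<noteq> []"
    using ne by simp
  show "set (xs @ tl ys) \<subseteq> V"
    using xs ys unfolding walk_def by (auto dest: list.set_sel(2))
  fix i assume i: "Suc i < length (xs @ tl ys)"
  show "E ((xs @ tl ys) ! i) ((xs @ tl ys) ! Suc i)"
  proof (cases "Suc i < length xs")
    case True
    then show ?thesis
      using xs unfolding walk_def by (simp add: nth_append)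
  next
    case False
    define j where "j = Suc i - length xs"
    have "(xs @ tl ys) ! i = ys ! j"
    proof (cases "i < length xs")
      case True
      then have "i = length xs - 1"
        using False by simp
      then have "(xs @ tl ys) ! i = last xs"
        using ne by (simp add: nth_append last_conv_nth)
      then show ?thesis
        using True False join ne by (simp add: hd_conv_nth j_def)
    next
      case False
      then show ?thesis
        using ne unfolding j_def by (cases ys) (auto simp: nth_append Suc_diff_le)
    qed
    moreover have "(xs @ tl ys) ! Suc i = ys ! Suc j"
      using False ne unfolding j_def by (cases ys) (auto simp: nth_append)
    moreover have "Suc j < length ys"
      using i False ne unfolding j_def by (cases ys) auto
    ultimately show ?thesis
      using ys unfolding walk_def by simp
  qed
qed

lemma reachable_refl: "v \<in> V \<Longrightarrow> reachable V E v v"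
  unfolding reachable_def by (rule exI[of _ "[v]"]) (simp add: walk_def)

lemma reachable_edge: "u \<in> V \<Longrightarrow> w \<in> V \<Longrightarrow> E u w \<Longrightarrow> reachable V E u w"
  unfolding reachable_def by (rule exI[of _ "[u, w]"]) (auto simp: walk_def less_Suc_eq)

lemma reachable_sym:
  assumes "\<forall>u v. E u v \<longrightarrow> E v u" "reachable V E u w"
  shows "reachable V E w u"
proof -
  obtain xs where "walk V E xs" "hd xs = u" "last xs = w"
    using assms(2) unfolding reachable_def by blast
  then have "walk V E (rev xs)" "hd (rev xs) = w" "last (rev xs) = u"
    using walk_rev[OF assms(1)] by (auto simp: hd_rev last_rev)
  then show ?thesis
    unfolding reachable_def by blast
qed

lemma reachable_trans:
  assumes "reachable V E u v" "reachable V E v w"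
  shows "reachable V E u w"
proof -
  obtain xs ys where xs: "walk V E xs" "hd xs = u" "last xs = v"
    and ys: "walk V E ys" "hd ys = v" "last ys = w"
    using assms unfolding reachable_def by blast
  have ne: "xs \<noteq> []" "ys \<noteq> []"
    using xs ys unfolding walk_def by auto
  have "last (xs @ tl ys) = w"
    using xs ys ne by (cases ys) auto
  moreover have "hd (xs @ tl ys) = u"
    using xs ne by simp
  moreover have "walk V E (xs @ tl ys)"
    using walk_append[OF xs(1) ys(1)] xs(3) ys(2) by simp
  ultimately show ?thesis
    unfolding reachable_def by blast
qed

lemma gdist_le:
  assumes "walk V E xs" "hd xs = u" "last xs = v" "length xs = Suc k"
  shows "gdist V E u v \<le> k"
  unfolding gdist_def using assms by (intro Least_le) blast

lemma shortest_walk_exists: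
  assumes "reachable V E u v"
  obtains xs where "walk V E xs" "hd xs = u" "last xs = v" "length xs = Suc (gdist V E u v)"
proof -
  obtain xs where xs: "walk V E xs" "hd xs = u" "last xs = v"
    using assms unfolding reachable_def by blast
  then have "length xs = Suc (length xs - 1)"
    unfolding walk_def by simp
  then have "\<exists>k xs. walk V E xs \<and> hd xs = u \<and> last xs = v \<and> length xs = Suc k"
    using xs by blast
  then have "\<exists>xs. walk V E xs \<and> hd xs = u \<and> last xs = v \<and> length xs = Suc (gdist V E u v)"
    unfolding gdist_def by (rule LeastI_ex)
  then show ?thesis
    using that by blast
qed

lemma gdist_refl: "u \<in> V \<Longrightarrow> gdist V E u u = 0"
  using gdist_le[of V E "[u]" u u 0] by (simp add: walk_def)

lemma gdist_pos:
  assumes "reachable V E u v" "u \<noteq> v"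
  shows "gdist V E u v \<ge> 1"
proof -
  obtain xs where xs: "hd xs = u" "last xs = v" "length xs = Suc (gdist V E u v)"
    using shortest_walk_exists[OF assms(1)] .
  have "length xs \<noteq> 1"
    using xs(1,2) assms(2) by (cases xs) auto
  then show ?thesis
    using xs(3) by simp
qed

lemma gdist_nonadjacent:
  assumes "reachable V E u v" "u \<noteq> v" "\<not> E u v"
  shows "gdist V E u v \<ge> 2"
proof (rule ccontr)
  obtain xs where xs: "walk V E xs" "hd xs = u" "last xs = v" "length xs = Suc (gdist V E u v)"
    using shortest_walk_exists[OF assms(1)] .
  assume "\<not> gdist V E u v \<ge> 2"
  then have "length xs = 2"
    using gdist_pos[OF assms(1,2)] xs(4) by simp
  then obtain a b where "xs = [a, b]"
    by (cases xs; cases "tl xs") auto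
  then show False
    using xs assms(3) unfolding walk_def by auto
qed

lemma gdist_adjacent:
  assumes "u \<in> V" "v \<in> V" "u \<noteq> v" "E u v"
  shows "gdist V E u v = 1"
  using gdist_le[of V E "[u, v]" u v 1] gdist_pos[OF reachable_edge[of u V v E] assms(3)]
    assms by (auto simp: walk_def less_Suc_eq)

lemma gdist_common_neighbour:
  assumes "u \<in> V" "v \<in> V" "w \<in> V" "u \<noteq> v" "\<not> E u v" "E u w" "E w v"
  shows "gdist V E u v = 2"
proof -
  have walk: "walk V E [u, w, v]"
    unfolding walk_def using assms by (auto simp: less_Suc_eq nth_Cons')
  then have "reachable V E u v"
    unfolding reachable_def by (intro exI[of _ "[u, w, v]"]) simp
  then have "gdist V E u v \<ge> 2"
    using assms(4,5) by (rule gdist_nonadjacent)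
  moreover have "gdist V E u v \<le> 2"
    using gdist_le[OF walk] by simp
  ultimately show ?thesis
    by simp
qed

lemma gdist_sym:
  assumes "\<forall>u v. E u v \<longrightarrow> E v u"
  shows "gdist V E u v = gdist V E v u"
proof -
  have "\<exists>ys. walk V E ys \<and> hd ys = b \<and> last ys = a \<and> length ys = Suc k"
    if "walk V E xs" "hd xs = a" "last xs = b" "length xs = Suc k" for xs a b k
    using that walk_rev[OF assms] by (intro exI[of _ "rev xs"]) (auto simp: hd_rev last_rev)
  then have "{k. \<exists>xs. walk V E xs \<and> hd xs = u \<and> last xs = v \<and> length xs = Suc k} =
      {k. \<exists>xs. walk V E xs \<and> hd xs = v \<and> last xs = u \<and> length xs = Suc k}"
    by blast
  then have "(\<lambda>k. \<exists>xs. walk V E xs \<and> hd xs = u \<and> last xs = v \<and> length xs = Suc k) =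
      (\<lambda>k. \<exists>xs. walk V E xs \<and> hd xs = v \<and> last xs = u \<and> length xs = Suc k)"
    by (simp add: set_eq_iff fun_eq_iff)
  then show ?thesis
    unfolding gdist_def by simp
qed

lemma dist_matrix_sym:
  "\<forall>u v. E u v \<longrightarrow> E v u \<Longrightarrow> dist_matrix V E u v = dist_matrix V E v u"
  unfolding dist_matrix_def by (simp add: gdist_sym)

lemma components_subset: "C \<in> Defs.components W F \<Longrightarrow> C \<subseteq> W"
  unfolding Defs.components_def by blast

lemma components_nonempty: "C \<in> Defs.components W F \<Longrightarrow> C \<noteq> {}"
  unfolding Defs.components_def using reachable_refl by fastforce

lemma finite_components: "finite W \<Longrightarrow> finite (Defs.components W F)"
  unfolding Defs.components_def by simp

lemma component_edge_closed:
  assumes "\<forall>u v. F u v \<longrightarrow> u \<in> W \<and> v \<in> W"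
    and "C \<in> Defs.components W F" "u \<in> C" "F u w"
  shows "w \<in> C"
proof -
  obtain v where v: "v \<in> W" "C = {x \<in> W. reachable W F v x}"
    using assms(2) unfolding Defs.components_def by blast
  have "reachable W F v u"
    using v assms(3) by blast
  moreover have "reachable W F u w"
    using assms(1,4) by (intro reachable_edge) auto
  ultimately have "reachable W F v w"
    by (rule reachable_trans)
  then show ?thesis
    using v assms(1,4) by blast
qed

lemma components_disjoint:
  assumes "\<forall>u v. F u v \<longrightarrow> F v u"
    and "C \<in> Defs.components W F" "C' \<in> Defs.components W F" "x \<in> C" "x \<in> C'"
  shows "C = C'"
proof -
  obtain v v' where v: "C = {x \<in> W. reachable W F v x}" and v': "C' = {x \<in> W. reachable W F v' x}"
    using assms(2,3) unfolding Defs.components_def by blast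
  have vx: "reachable W F v x" and v'x: "reachable W F v' x"
    using assms(4,5) v v' by auto
  have "reachable W F v v'" "reachable W F v' v"
    using reachable_trans[OF vx reachable_sym[OF assms(1) v'x]]
      reachable_trans[OF v'x reachable_sym[OF assms(1) vx]] .
  then have "reachable W F v u \<longleftrightarrow> reachable W F v' u" for u
    using reachable_trans[of W F v v' u] reachable_trans[of W F v' v u] by blast
  then show ?thesis
    unfolding v v' by simp
qed

lemma components_connected:
  assumes "connected_graph V E"
  shows "Defs.components V E = {V}"
proof -
  have "Defs.components V E = (\<lambda>v. V) ` V"
    unfolding Defs.components_def using assms unfolding connected_graph_def
    by (intro image_cong refl) blast
  then show ?thesis
    using assms unfolding connected_graph_def by (simp add: image_constant_conv)
qed

lemma card_Union_components:
  assumes "simple_graph W F" "\<C> \<subseteq> Defs.components W F"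
  shows "card (\<Union>\<C>) = sum card \<C>"
proof (rule card_Union_disjoint)
  have fin: "finite W" and sym: "\<forall>u v. F u v \<longrightarrow> F v u"
    using assms(1) unfolding simple_graph_def by auto
  show "pairwise disjnt \<C>"
  proof (rule pairwiseI)
    fix C C' assume C: "C \<in> \<C>" "C' \<in> \<C>" "C \<noteq> C'"
    show "disjnt C C'"
    proof (rule ccontr)
      assume "\<not> disjnt C C'"
      then obtain x where "x \<in> C" "x \<in> C'"
        unfolding disjnt_def by blast
      then have "C = C'"
        using components_disjoint[OF sym] C(1,2) assms(2) by blast
      with C(3) show False ..
    qed
  qed
  show "finite C" if "C \<in> \<C>" for C
    using that assms(2) finite_subset[OF components_subset fin] by blast
qed

lemma card_le_card_Union_components:
  assumes "simple_graph W F" "\<C> \<subseteq> Defs.components W F"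
  shows "card \<C> \<le> card (\<Union>\<C>)"
proof -
  have "finite W"
    using assms(1) unfolding simple_graph_def by simp
  then have "card C \<ge> 1" if "C \<in> \<C>" for C
    using that assms(2) components_nonempty finite_subset[OF components_subset]
    by (metis One_nat_def Suc_leI card_gt_0_iff subsetD)
  then have "card \<C> \<le> sum card \<C>"
    using sum_mono[of \<C> "\<lambda>_. 1" card] by simp
  then show ?thesis
    using card_Union_components[OF assms] by simp
qed

lemma Union_other_components_subset:
  assumes "simple_graph W F" "C \<in> Defs.components W F" "\<C> \<subseteq> Defs.components W F - {C}"
  shows "\<Union>\<C> \<subseteq> W - C"
proof
  fix x assume "x \<in> \<Union>\<C>"
  then obtain D where D: "D \<in> Defs.components W F" "D \<noteq> C" "x \<in> D"
    using assms(3) by blast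
  have "\<forall>u v. F u v \<longrightarrow> F v u"
    using assms(1) unfolding simple_graph_def by blast
  then have "x \<notin> C"
    using components_disjoint[of F D W C x] D assms(2) by blast
  then show "x \<in> W - C"
    using components_subset[OF D(1)] D(3) by blast
qed

lemma component_no_edge_out:
  assumes "simple_graph W F" "C \<in> Defs.components W F"
  shows "\<forall>u\<in>C. \<forall>v\<in>W - C. \<not> F u v"
proof (intro ballI notI)
  fix u v assume "u \<in> C" "v \<in> W - C" "F u v"
  moreover have "\<forall>u v. F u v \<longrightarrow> u \<in> W \<and> v \<in> W"
    using assms(1) unfolding simple_graph_def by blast
  ultimately have "v \<in> C"
    using component_edge_closed assms(2) by metis
  with \<open>v \<in> W - C\<close> show False
    by blast
qed

section \<open>A lower bound for the distance quadratic form\<close>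

definition non_edges :: "'a set \<Rightarrow> ('a \<Rightarrow> 'a \<Rightarrow> bool) \<Rightarrow> ('a \<times> 'a) set" where
  "non_edges V E = {(u, v). u \<in> V \<and> v \<in> V \<and> u \<noteq> v \<and> \<not> E u v}"

lemma sum_product_pairs:
  "(\<Sum>p\<in>A \<times> B. x (fst p) * x (snd p)) = (\<Sum>v\<in>A. x v) * (\<Sum>v\<in>B. x v :: real)"
  by (simp add: sum_product sum.cartesian_product case_prod_beta')

lemma sum_offdiagonal_products:
  assumes "finite A"
  shows "(\<Sum>p\<in>A \<times> A - Id. x (fst p) * x (snd p))
    = (\<Sum>v\<in>A. x v)\<^sup>2 - (\<Sum>v\<in>A. (x v)\<^sup>2 :: real)"
proof -
  have "A \<times> A - Id = A \<times> A - Id_on A" and "Id_on A \<subseteq> A \<times> A"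
    by auto
  moreover have "Id_on A = (\<lambda>v. (v, v)) ` A"
    by auto
  then have "(\<Sum>p\<in>Id_on A. x (fst p) * x (snd p)) = (\<Sum>v\<in>A. (x v)\<^sup>2)"
    by (simp add: sum.reindex inj_on_def power2_eq_square)
  ultimately show ?thesis
    using assms by (simp add: sum_diff sum_product_pairs power2_eq_square)
qed

lemma quad_form_dist_matrix_ge:
  assumes "simple_graph V E" "connected_graph V E" "\<forall>v. x v \<ge> 0"
    and "Q \<subseteq> non_edges V E"
  shows "(\<Sum>v\<in>V. x v)\<^sup>2 - sq_norm V x + (\<Sum>p\<in>Q. x (fst p) * x (snd p))
      \<le> quad_form V (dist_matrix V E) x"
proof -
  have fin: "finite V"
    using assms(1) unfolding simple_graph_def by simp
  let ?f = "\<lambda>p. x (fst p) * x (snd p)"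
  have Q: "Q \<subseteq> {(u, v). u \<in> V \<and> v \<in> V \<and> u \<noteq> v \<and> \<not> E u v}"
    using assms(4) unfolding non_edges_def .
  have dist_ge: "of_bool (p \<in> V \<times> V - Id) + of_bool (p \<in> Q) \<le> dist_matrix V E (fst p) (snd p)"
    if "p \<in> V \<times> V" for p
  proof (cases "fst p = snd p")
    case False
    then have "reachable V E (fst p) (snd p)"
      using assms(2) that unfolding connected_graph_def by auto
    then show ?thesis
      using gdist_pos gdist_nonadjacent False Q unfolding dist_matrix_def by fastforce
  qed (use Q in \<open>auto simp: dist_matrix_def\<close>)
  have "(\<Sum>p\<in>V \<times> V. (of_bool (p \<in> V \<times> V - Id) + of_bool (p \<in> Q)) * ?f p)
      \<le> (\<Sum>p\<in>V \<times> V. dist_matrix V E (fst p) (snd p) * ?f p)"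
    using dist_ge assms(3) by (intro sum_mono mult_right_mono) auto
  moreover have "(\<Sum>p\<in>V \<times> V. dist_matrix V E (fst p) (snd p) * ?f p) = quad_form V (dist_matrix V E) x"
    unfolding quad_form_def by (simp add: sum.cartesian_product case_prod_beta' mult.assoc)
  moreover have "(\<Sum>p\<in>V \<times> V. (of_bool (p \<in> V \<times> V - Id) + of_bool (p \<in> Q)) * ?f p)
      = (\<Sum>p\<in>V \<times> V - Id. ?f p) + (\<Sum>p\<in>Q. ?f p)"
  proof -
    have "V \<times> V \<inter> {p. p \<notin> Id} = V \<times> V - Id" "V \<times> V \<inter> Q = Q"
      using Q by auto
    then show ?thesis
      using fin by (simp add: distrib_right sum.distrib)
  qed
  ultimately show ?thesis
    using sum_offdiagonal_products[OF fin, of x] unfolding sq_norm_def by simp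
qed

lemma products_subset_non_edges:
  assumes "\<forall>u v. E u v \<longrightarrow> E v u" "A \<subseteq> V" "B \<subseteq> V" "A \<inter> B = {}"
    and "\<forall>u\<in>A. \<forall>v\<in>B. \<not> E u v"
  shows "A \<times> B \<union> B \<times> A \<subseteq> non_edges V E"
proof -
  have "\<not> E v u" if "u \<in> A" "v \<in> B" for u v
    using assms(5) that assms(1)[rule_format, of v u] by blast
  then show ?thesis
    using assms(2-5) unfolding non_edges_def by auto
qed

lemma sum_symmetric_product_pairs:
  assumes "finite A" "finite B" "A \<inter> B = {}"
  shows "(\<Sum>q\<in>A \<times> B \<union> B \<times> A. x (fst q) * x (snd q))
    = 2 * (\<Sum>v\<in>A. x v) * (\<Sum>v\<in>B. x v :: real)"
proof -
  have "(A \<times> B) \<inter> (B \<times> A) = {}"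
    using assms(3) by auto
  then show ?thesis
    using assms by (simp add: sum.union_disjoint sum_product_pairs)
qed

section \<open>The extremal graph\<close>

text \<open>By symmetry the Perron vector of D(K_1 \<or> (K_{N-2} \<union> K_1)) takes a value a on the
dominating vertex, b on the pendant vertex and a common value y on the clique; these
are the equations it satisfies (normalised to unit length).\<close>

locale perron_triple =
  fixes N \<rho> a y b :: real
  assumes pos: "a > 0" "y > 0" "b > 0"
    and unit: "a\<^sup>2 + (N - 2) * y\<^sup>2 + b\<^sup>2 = 1"
    and eq_a: "\<rho> * a = (N - 2) * y + b"
    and eq_y: "\<rho> * y = a + (N - 3) * y + 2 * b"
    and eq_b: "\<rho> * b = a + 2 * (N - 2) * y"
begin

lemma rho_eq: "\<rho> = (a + (N - 2) * y + b)\<^sup>2 - 1 + 2 * (N - 2) * y * b"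
proof -
  have "\<rho> = \<rho> * (a\<^sup>2 + (N - 2) * y\<^sup>2 + b\<^sup>2)"
    using unit by simp
  also have "\<dots> = a * (\<rho> * a) + (N - 2) * y * (\<rho> * y) + b * (\<rho> * b)"
    by (simp add: algebra_simps power2_eq_square)
  also have "\<dots> = (a + (N - 2) * y + b)\<^sup>2 - (a\<^sup>2 + (N - 2) * y\<^sup>2 + b\<^sup>2) + 2 * (N - 2) * y * b"
    unfolding eq_a eq_y eq_b by (simp add: algebra_simps power2_eq_square)
  finally show ?thesis
    using unit by simp
qed

lemma pendant_eq: "(\<rho> + 2) * b = (\<rho> + N - 1) * y"
  using eq_y eq_b by (simp add: algebra_simps)

lemma rho_gt:
  assumes "N \<ge> 3"
  shows "\<rho> > N - 1"
proof -
  have "\<rho> + 2 > 0"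
  proof (rule ccontr)
    assume "\<not> \<rho> + 2 > 0"
    then have "\<rho> * y \<le> -2 * y"
      using mult_right_mono[of \<rho> "-2" y] pos by simp
    moreover have "a + (N - 3) * y + 2 * b > 0"
      using pos assms by (simp add: add_pos_nonneg)
    ultimately show False
      using eq_y pos by linarith
  qed
  moreover have "(\<rho> + N - 1) * y = (\<rho> + 2) * y + (N - 3) * y"
    by (simp add: algebra_simps)
  then have "(\<rho> + 2) * b \<ge> (\<rho> + 2) * y"
    using pendant_eq assms pos by simp
  ultimately have "b \<ge> y"
    by simp
  then have "\<rho> * y > (N - 1) * y"
    using eq_y pos by (simp add: algebra_simps)
  then show ?thesis
    using pos by simp
qed

lemma pendant_lt_twice_clique:
  assumes "N \<ge> 3"
  shows "b < 2 * y"
proof -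
  have "(\<rho> + N - 1) * y < (2 * \<rho> + 4) * y"
    using rho_gt[OF assms] pos by (intro mult_strict_right_mono) auto
  then have "(\<rho> + 2) * b < (\<rho> + 2) * (2 * y)"
    using pendant_eq by (simp add: algebra_simps)
  then show ?thesis
    using rho_gt[OF assms] assms by simp
qed

lemma pendant_bound:
  assumes "N \<ge> 4"
  shows "b * (N + 1) < 2 * (N - 1) * y"
proof -
  have \<rho>: "\<rho> > N - 1"
    using rho_gt assms by simp
  have "(\<rho> + 2) * (2 * (N - 1)) - (\<rho> + N - 1) * (N + 1) = (N - 3) * (\<rho> - (N - 1))"
    by (simp add: algebra_simps)
  also have "\<dots> > 0"
    using assms \<rho> by simp
  finally have less: "(\<rho> + N - 1) * (N + 1) * y < (\<rho> + 2) * (2 * (N - 1)) * y"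
    using pos by simp
  have "(\<rho> + 2) * (b * (N + 1)) = ((\<rho> + 2) * b) * (N + 1)"
    by (simp add: algebra_simps)
  also have "\<dots> = (\<rho> + N - 1) * (N + 1) * y"
    unfolding pendant_eq by (simp add: algebra_simps)
  also have "\<dots> < (\<rho> + 2) * (2 * (N - 1) * y)"
    using less by (simp add: mult.assoc)
  finally have "(\<rho> + 2) * (b * (N + 1)) < (\<rho> + 2) * (2 * (N - 1) * y)" .
  then show ?thesis
    using \<rho> assms by simp
qed

text \<open>For N = 5 the spectral radius is the largest root of
\<rho>^3 - 2 \<rho>^2 - 16 \<rho> - 10, which is about 5.37.\<close>

lemma rho_bound_order_5:
  assumes "N = 5"
  shows "\<rho> < 188 / 35"
proof -
  have "(\<rho>\<^sup>2 - 1) * b = (6 * \<rho> + 3) * y"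
  proof -
    have "\<rho> * (\<rho> * b) = \<rho> * a + 6 * \<rho> * y"
      using eq_b assms by (simp add: algebra_simps)
    then show ?thesis
      using eq_a assms by (simp add: algebra_simps power2_eq_square)
  qed
  have "(\<rho>\<^sup>2 - 1) * ((\<rho> + 4) * y) = (\<rho>\<^sup>2 - 1) * ((\<rho> + 2) * b)"
    using pendant_eq assms by simp
  also have "\<dots> = (\<rho> + 2) * ((\<rho>\<^sup>2 - 1) * b)"
    by (simp add: algebra_simps)
  also have "\<dots> = (\<rho> + 2) * ((6 * \<rho> + 3) * y)"
    unfolding \<open>(\<rho>\<^sup>2 - 1) * b = (6 * \<rho> + 3) * y\<close> ..
  finally have "(\<rho>\<^sup>2 - 1) * ((\<rho> + 4) * y) = (\<rho> + 2) * ((6 * \<rho> + 3) * y)" .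
  then have "(\<rho>^3 - 2 * \<rho>\<^sup>2 - 16 * \<rho> - 10) * y = 0"
    by (simp add: algebra_simps power2_eq_square power3_eq_cube)
  then have cubic: "\<rho>^3 - 2 * \<rho>\<^sup>2 - 16 * \<rho> - 10 = 0"
    using pos by simp
  show ?thesis
  proof (rule ccontr)
    define c :: real where "c = 188 / 35"
    assume "\<not> \<rho> < 188 / 35"
    then have "\<rho> - c \<ge> 0"
      unfolding c_def by simp
    then have "(\<rho> - c) * (\<rho>\<^sup>2 + (c - 2) * \<rho> + (c\<^sup>2 - 2 * c - 16)) \<ge> 0"
      unfolding c_def by (simp add: power2_eq_square)
    moreover have "\<rho>^3 - 2 * \<rho>\<^sup>2 - 16 * \<rho> - 10
        = (\<rho> - c) * (\<rho>\<^sup>2 + (c - 2) * \<rho> + (c\<^sup>2 - 2 * c - 16)) + (c^3 - 2 * c\<^sup>2 - 16 * c - 10)"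
      by (simp add: algebra_simps power2_eq_square power3_eq_cube)
    moreover have "c^3 - 2 * c\<^sup>2 - 16 * c - 10 > 0"
      unfolding c_def by (simp add: power2_eq_square power3_eq_cube)
    ultimately show False
      using cubic by linarith
  qed
qed

lemma component_excess:
  assumes "N = s + c + u" "s \<ge> 1" "c \<ge> 3" "u \<ge> s + 1"
  shows "2 * (N - 2) * y * b < 2 * (b + (c - 1) * y) * (u * y)"
proof -
  have "b * (s + c - 2) < 2 * y * (s + c - 2)"
    using pendant_lt_twice_clique assms by (intro mult_strict_right_mono) auto
  moreover have "(c - 1) * (s + 1) * y \<le> (c - 1) * u * y"
    using assms pos by (intro mult_right_mono mult_left_mono) auto
  moreover have "(c - 1) * (s + 1) * y - 2 * y * (s + c - 2) = (c - 3) * (s - 1) * y"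
    by (simp add: algebra_simps)
  moreover have "(c - 3) * (s - 1) * y \<ge> 0"
    using assms pos by simp
  ultimately have "(N - 2) * b < (b + (c - 1) * y) * u"
    using assms(1) by (simp add: algebra_simps)
  then have "2 * y * ((N - 2) * b) < 2 * y * ((b + (c - 1) * y) * u)"
    using pos by simp
  then show ?thesis
    by (simp add: algebra_simps)
qed

lemma independent_set_excess:
  assumes "2 * s \<le> N - 1" "N \<ge> 7" "s \<ge> 2"
  shows "2 * (N - 2) * y * b
    < (b + (s - 1) * y)\<^sup>2 - (b\<^sup>2 + (s - 1) * y\<^sup>2) + 2 * (b + (s - 1) * y) * ((N - 2 * s) * y)"
proof -
  have "(N + 1) * (2 * b) < 4 * ((N - 1) * y)"
    using pendant_bound assms by (simp add: algebra_simps)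
  also have "\<dots> \<le> (N + 1) / 2 * ((N - 1) * y)"
    using assms pos by (intro mult_right_mono) auto
  also have "\<dots> = (N + 1) * ((N - 1) / 2 * y)"
    by simp
  also have "\<dots> \<le> (N + 1) * ((2 * N - 3 * s - 2) * y)"
    using assms pos by (intro mult_left_mono mult_right_mono) auto
  finally have "2 * b < (2 * N - 3 * s - 2) * y"
    using assms by simp
  then have "0 < (s - 1) * y * ((2 * N - 3 * s - 2) * y - 2 * b)"
    using assms pos by simp
  also have "\<dots> = (b + (s - 1) * y)\<^sup>2 - (b\<^sup>2 + (s - 1) * y\<^sup>2)
      + 2 * (b + (s - 1) * y) * ((N - 2 * s) * y) - 2 * (N - 2) * y * b"
    by (simp add: algebra_simps power2_eq_square)
  finally show ?thesis
    by simp
qed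

end

lemma perron_tripleI:
  fixes N \<rho> a y b :: real
  assumes "N \<ge> 3" "\<rho> \<ge> 0" and nonneg: "a \<ge> 0" "y \<ge> 0" "b \<ge> 0"
    and unit: "a\<^sup>2 + (N - 2) * y\<^sup>2 + b\<^sup>2 = 1"
    and eqs: "\<rho> * a = (N - 2) * y + b" "\<rho> * y = a + (N - 3) * y + 2 * b"
      "\<rho> * b = a + 2 * (N - 2) * y"
  shows "perron_triple N \<rho> a y b"
proof -
  have "a + (N - 2) * y + b > 0"
  proof (rule ccontr)
    assume "\<not> a + (N - 2) * y + b > 0"
    moreover have "(N - 2) * y \<ge> 0"
      using nonneg assms(1) by simp
    ultimately have "a = 0" "b = 0" "(N - 2) * y = 0"
      using nonneg by linarith+
    then show False
      using unit assms(1) by simp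
  qed
  moreover have "(\<rho> + 1) * a = a + (N - 2) * y + b" "(\<rho> + 1) * y = a + (N - 2) * y + b + b"
    using eqs(1,2) by (simp_all add: algebra_simps)
  ultimately have "(\<rho> + 1) * a > 0" "(\<rho> + 1) * y > 0"
    using nonneg by linarith+
  then have "a > 0" "y > 0"
    using assms(2) by (auto simp: zero_less_mult_iff)
  moreover have "\<rho> * b > 0"
    using eqs(3) \<open>a > 0\<close> \<open>y > 0\<close> assms(1) by (simp add: add_pos_nonneg)
  then have "b > 0"
    using nonneg(3) by (simp add: zero_less_mult_iff)
  ultimately show ?thesis
    using unit eqs unfolding perron_triple_def by simp
qed

lemma special_graph_sym: "special_graph n u v \<Longrightarrow> special_graph n v u"
  unfolding special_graph_def by auto

lemma dist_matrix_special_graph: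
  assumes "n \<ge> 3" "u < n" "v < n"
  shows "dist_matrix {0..<n} (special_graph n) u v
    = (if u = v then 0 else if special_graph n u v then 1 else 2)"
proof -
  consider "u = v" | "u \<noteq> v" "special_graph n u v" | "u \<noteq> v" "\<not> special_graph n u v"
    by blast
  then show ?thesis
  proof cases
    case 1
    then show ?thesis
      using gdist_refl[of u "{0..<n}"] assms unfolding dist_matrix_def by simp
  next
    case 2
    then show ?thesis
      using gdist_adjacent[of u "{0..<n}" v] assms unfolding dist_matrix_def by simp
  next
    case 3
    moreover have "special_graph n u 0" "special_graph n 0 v"
      using 3 assms unfolding special_graph_def by auto
    ultimately show ?thesis
      using gdist_common_neighbour[of u "{0..<n}" v 0] assms unfolding dist_matrix_def by simp
  qed
qed

lemma sum_special_graph_vertices: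
  fixes n :: nat
  assumes "n \<ge> 3"
  shows "(\<Sum>v\<in>{0..<n}. f v) = f 0 + (\<Sum>v\<in>{1..n-2}. f v) + (f (n - 1) :: real)"
proof -
  have "{0..<n} = insert 0 (insert (n - 1) {1..n-2})" "0 \<notin> insert (n - 1) {1..n-2}"
    "n - 1 \<notin> {1..n-2}"
    using assms by auto
  then show ?thesis
    by (simp add: algebra_simps)
qed

text \<open>The last summand collects the vertices at distance 2 from u: none for the
dominating vertex 0, the clique for the pendant vertex n - 1, and n - 1 for a clique vertex.\<close>

lemma special_graph_row:
  assumes "n \<ge> 3" "u < n"
  shows "(\<Sum>j\<in>{0..<n}. dist_matrix {0..<n} (special_graph n) u j * x j)
    = (\<Sum>j\<in>{0..<n}. x j) - x u
      + (if u = 0 then 0 else if u = n - 1 then (\<Sum>j\<in>{1..n-2}. x j) else x (n - 1))"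
proof -
  define F where "F = (if u = 0 then {} else if u = n - 1 then {1..n-2} else {n - 1})"
  have F: "{0..<n} \<inter> F = F"
    using assms unfolding F_def by auto
  have "dist_matrix {0..<n} (special_graph n) u j * x j = of_bool (j \<noteq> u) * x j + of_bool (j \<in> F) * x j"
    if "j \<in> {0..<n}" for j
    using that assms by (auto simp: dist_matrix_special_graph F_def special_graph_def)
  then have "(\<Sum>j\<in>{0..<n}. dist_matrix {0..<n} (special_graph n) u j * x j)
      = (\<Sum>j\<in>{0..<n} \<inter> {j. j \<noteq> u}. x j) + (\<Sum>j\<in>F. x j)"
    using F by (simp add: sum.distrib)
  also have "{0..<n} \<inter> {j. j \<noteq> u} = {0..<n} - {u}"
    by auto
  finally show ?thesis
    using assms by (simp add: sum_diff1 F_def)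
qed

lemma special_graph_eigenvector_row:
  assumes "n \<ge> 3" "u < n"
    and "\<forall>u\<in>{0..<n}. (\<Sum>j\<in>{0..<n}. dist_matrix {0..<n} (special_graph n) u j * x j) = \<rho> * x u"
  shows "\<rho> * x u = (\<Sum>j\<in>{0..<n}. x j) - x u
      + (if u = 0 then 0 else if u = n - 1 then (\<Sum>j\<in>{1..n-2}. x j) else x (n - 1))"
proof -
  have "\<rho> * x u = (\<Sum>j\<in>{0..<n}. dist_matrix {0..<n} (special_graph n) u j * x j)"
    using assms(2,3) by simp
  then show ?thesis
    unfolding special_graph_row[OF assms(1,2)] .
qed

lemma special_graph_eigenvector_clique:
  assumes "n \<ge> 3" "\<rho> \<noteq> -1"
    and ev: "\<forall>u\<in>{0..<n}. (\<Sum>j\<in>{0..<n}. dist_matrix {0..<n} (special_graph n) u j * x j) = \<rho> * x u"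
    and "r \<in> {1..n-2}"
  shows "x r = x 1"
proof -
  have "(\<rho> + 1) * x r = (\<Sum>j\<in>{0..<n}. x j) + x (n - 1)" if "r \<in> {1..n-2}" for r
  proof -
    have "r < n" "r \<noteq> 0" "r \<noteq> n - 1"
      using that assms(1) by auto
    then show ?thesis
      using special_graph_eigenvector_row[OF assms(1) _ ev, of r] by (simp add: algebra_simps)
  qed
  then have "(\<rho> + 1) * x r = (\<rho> + 1) * x 1"
    using assms(1,4) by simp
  moreover have "\<rho> + 1 \<noteq> 0"
    using assms(2) by linarith
  ultimately show "x r = x 1"
    by simp
qed

lemma special_graph_eigenvector:
  assumes "n \<ge> 3" "\<rho> \<noteq> -1"
    and ev: "\<forall>u\<in>{0..<n}. (\<Sum>j\<in>{0..<n}. dist_matrix {0..<n} (special_graph n) u j * x j) = \<rho> * x u"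
  shows "\<rho> * x 0 = (real n - 2) * x 1 + x (n - 1)"
    and "\<rho> * x 1 = x 0 + (real n - 3) * x 1 + 2 * x (n - 1)"
    and "\<rho> * x (n - 1) = x 0 + 2 * (real n - 2) * x 1"
proof -
  define T where "T = (\<Sum>j\<in>{0..<n}. x j)"
  have "(\<Sum>j\<in>{1..n-2}. x j) = (\<Sum>j\<in>{1..n-2}. x 1)"
    using special_graph_eigenvector_clique[OF assms] by (rule sum.cong[OF refl])
  then have clique_sum: "(\<Sum>j\<in>{1..n-2}. x j) = (real n - 2) * x 1"
    using assms(1) by (simp add: of_nat_diff)
  have T: "T = x 0 + (real n - 2) * x 1 + x (n - 1)"
    using sum_special_graph_vertices[OF assms(1), of x] clique_sum unfolding T_def by simp
  have "1 < n - 1"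
    using assms(1) by simp
  then have "\<rho> * x 0 = T - x 0" "\<rho> * x 1 = T - x 1 + x (n - 1)"
    "\<rho> * x (n - 1) = T - x (n - 1) + (\<Sum>j\<in>{1..n-2}. x j)"
    using special_graph_eigenvector_row[OF assms(1) _ ev] unfolding T_def by simp_all
  then show "\<rho> * x 0 = (real n - 2) * x 1 + x (n - 1)"
    and "\<rho> * x 1 = x 0 + (real n - 3) * x 1 + 2 * x (n - 1)"
    and "\<rho> * x (n - 1) = x 0 + 2 * (real n - 2) * x 1"
    unfolding T clique_sum by (simp_all add: algebra_simps)
qed

lemma special_graph_perron_triple:
  assumes "n \<ge> 3"
  obtains a y b where
    "perron_triple (real n) (distance_spectral_radius {0..<n} (special_graph n)) a y b"
proof -
  let ?V = "{0..<n}" and ?D = "dist_matrix {0..<n} (special_graph n)"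
  define \<rho> where "\<rho> = distance_spectral_radius ?V (special_graph n)"
  have sym: "\<forall>u\<in>?V. \<forall>v\<in>?V. ?D u v = ?D v u"
    using dist_matrix_sym[of "special_graph n"] special_graph_sym by blast
  have nonneg: "\<forall>u\<in>?V. \<forall>v\<in>?V. ?D u v \<ge> 0"
    unfolding dist_matrix_def by simp
  obtain x where x_nonneg: "\<forall>i. x i \<ge> 0" and x_unit: "sq_norm ?V x = 1"
    and ev_lambda1: "\<forall>u\<in>?V. (\<Sum>j\<in>?V. ?D u j * x j) = lambda1 ?V ?D * x u"
    by (rule lambda1_nonneg_eigenvector[OF _ _ sym nonneg]) (use assms in auto)
  have ev: "\<forall>u\<in>?V. (\<Sum>j\<in>?V. ?D u j * x j) = \<rho> * x u"
    using ev_lambda1 unfolding \<rho>_def distance_spectral_radius_def .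
  have "\<rho> = quad_form ?V ?D x"
    using quad_form_eigenvector[OF ev] x_unit by simp
  also have "\<dots> \<ge> 0"
    unfolding quad_form_def dist_matrix_def using x_nonneg by (intro sum_nonneg) auto
  finally have "\<rho> \<ge> 0" .
  then have "\<rho> \<noteq> -1"
    by linarith
  note eqs = special_graph_eigenvector[OF assms this ev]
  have "(x j)\<^sup>2 = (x 1)\<^sup>2" if "j \<in> {1..n-2}" for j
    using special_graph_eigenvector_clique[OF assms \<open>\<rho> \<noteq> -1\<close> ev that] by simp
  then have "(\<Sum>j\<in>{1..n-2}. (x j)\<^sup>2) = (\<Sum>j\<in>{1..n-2}. (x 1)\<^sup>2)"
    by (rule sum.cong[OF refl])
  then have "(x 0)\<^sup>2 + (real n - 2) * (x 1)\<^sup>2 + (x (n - 1))\<^sup>2 = 1"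
    using x_unit sum_special_graph_vertices[OF assms, of "\<lambda>j. (x j)\<^sup>2"] assms
    unfolding sq_norm_def by (simp add: of_nat_diff)
  then show ?thesis
    using that perron_tripleI[OF _ \<open>\<rho> \<ge> 0\<close> _ _ _ _ eqs] x_nonneg assms
    unfolding \<rho>_def by simp
qed

section \<open>Test vectors\<close>

lemma spectral_radius_gt_of_rayleigh:
  assumes "simple_graph V E" "V \<noteq> {}" "\<rho> * sq_norm V x < quad_form V (dist_matrix V E) x"
  shows "\<rho> < distance_spectral_radius V E"
proof -
  have "finite V" "\<forall>u v. E u v \<longrightarrow> E v u"
    using assms(1) unfolding simple_graph_def by auto
  then have "quad_form V (dist_matrix V E) x \<le> distance_spectral_radius V E * sq_norm V x"
    unfolding distance_spectral_radius_def
    using rayleigh_le_lambda1 assms(2) dist_matrix_sym by metis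
  then have "\<rho> * sq_norm V x < distance_spectral_radius V E * sq_norm V x"
    using assms(3) by linarith
  then show ?thesis
    using sq_norm_nonneg[of V x] by (metis mult_right_less_imp_less)
qed

text \<open>The Perron vector of the extremal graph, transplanted to V: w plays the
dominating vertex and p the pendant vertex.\<close>

definition three_valued :: "'a \<Rightarrow> 'a \<Rightarrow> real \<Rightarrow> real \<Rightarrow> real \<Rightarrow> 'a \<Rightarrow> real" where
  "three_valued w p a b y v = (if v = w then a else if v = p then b else y)"

lemma sum_three_valued_other:
  assumes "w \<notin> A" "p \<notin> A"
  shows "(\<Sum>v\<in>A. f (three_valued w p a b y v)) = real (card A) * f y"
proof -
  have "(\<Sum>v\<in>A. f (three_valued w p a b y v)) = (\<Sum>v\<in>A. f y)"
    using assms unfolding three_valued_def by (intro sum.cong) auto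
  then show ?thesis
    by simp
qed

lemma sum_three_valued_pendant:
  assumes "finite A" "w \<notin> A" "p \<in> A"
  shows "(\<Sum>v\<in>A. f (three_valued w p a b y v)) = f b + (real (card A) - 1) * f y"
proof -
  have "card A \<ge> 1" "p \<noteq> w"
    using assms card_0_eq by fastforce+
  moreover have "(\<Sum>v\<in>A. f (three_valued w p a b y v))
      = f (three_valued w p a b y p) + (\<Sum>v\<in>A - {p}. f (three_valued w p a b y v))"
    using assms by (simp add: sum.remove)
  ultimately show ?thesis
    using assms sum_three_valued_other[of w "A - {p}" p f a b y]
    by (simp add: three_valued_def of_nat_diff)
qed

lemma sum_three_valued:
  assumes "finite A" "w \<in> A" "p \<in> A" "w \<noteq> p"
  shows "(\<Sum>v\<in>A. f (three_valued w p a b y v)) = f a + f b + (real (card A) - 2) * f y"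
proof -
  have "card A \<ge> 1"
    using assms card_0_eq by fastforce
  moreover have "(\<Sum>v\<in>A. f (three_valued w p a b y v))
      = f (three_valued w p a b y w) + (\<Sum>v\<in>A - {w}. f (three_valued w p a b y v))"
    using assms by (simp add: sum.remove)
  ultimately show ?thesis
    using assms sum_three_valued_pendant[of "A - {w}" w p f a b y]
    by (simp add: three_valued_def of_nat_diff algebra_simps)
qed

text \<open>The bound 2 (N - 2) y b is what the non-edges of the extremal graph contribute
to the quadratic form of its own Perron vector.\<close>

lemma (in perron_triple) three_valued_beats_rho:
  assumes G: "simple_graph V E" "connected_graph V E" "card V = n" "N = real n"
    and wp: "w \<in> V" "p \<in> V" "w \<noteq> p"
    and Q: "Q \<subseteq> non_edges V E"
    and excess: "2 * (N - 2) * y * b <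
      (\<Sum>q\<in>Q. three_valued w p a b y (fst q) * three_valued w p a b y (snd q))"
  shows "\<rho> < distance_spectral_radius V E"
proof -
  let ?x = "three_valued w p a b y"
  have fin: "finite V"
    using G(1) unfolding simple_graph_def by simp
  have "(\<Sum>v\<in>V. ?x v) = a + (N - 2) * y + b"
    using sum_three_valued[OF fin wp, of "\<lambda>t. t"] G(3,4) by simp
  moreover have norm: "sq_norm V ?x = 1"
    using sum_three_valued[OF fin wp, of "\<lambda>t. t\<^sup>2"] G(3,4) unit unfolding sq_norm_def by simp
  moreover have "\<forall>v. ?x v \<ge> 0"
    using pos unfolding three_valued_def by simp
  ultimately have "(a + (N - 2) * y + b)\<^sup>2 - 1 + (\<Sum>q\<in>Q. ?x (fst q) * ?x (snd q))
      \<le> quad_form V (dist_matrix V E) ?x"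
    using quad_form_dist_matrix_ge[OF G(1,2) _ Q] by metis
  then have "\<rho> * sq_norm V ?x < quad_form V (dist_matrix V E) ?x"
    using excess rho_eq norm by simp
  then show ?thesis
    using spectral_radius_gt_of_rayleigh G(1) wp(1) by blast
qed

section \<open>Separated odd component\<close>

lemma odd_component_case:
  assumes G: "simple_graph V E" "connected_graph V E" "card V = n"
    and H: "perron_triple (real n) \<rho> a y b"
    and S: "S \<subseteq> V" "S \<noteq> {}" and C: "C \<subseteq> V - S" "card C \<ge> 3"
    and sep: "\<forall>u\<in>C. \<forall>v\<in>V - S - C. \<not> E u v"
    and rest: "card (V - S - C) \<ge> card S + 1"
  shows "\<rho> < distance_spectral_radius V E"
proof -
  interpret perron_triple "real n" \<rho> a y b
    by (rule H)
  have fin: "finite V" and sym: "\<forall>u v. E u v \<longrightarrow> E v u"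
    using G(1) unfolding simple_graph_def by auto
  define U where "U = V - S - C"
  obtain w p where wp: "w \<in> S" "p \<in> C"
    using S(2) C(2) by fastforce
  let ?x = "three_valued w p a b y"
  have finite: "finite S" "finite C" "finite U"
    using fin S(1) C(1) unfolding U_def by (auto intro: finite_subset)
  have "C \<inter> U = {}"
    unfolding U_def by blast
  have Q: "C \<times> U \<union> U \<times> C \<subseteq> non_edges V E"
    using sep C(1) unfolding U_def by (intro products_subset_non_edges[OF sym]) auto
  have "(\<Sum>q\<in>C \<times> U \<union> U \<times> C. ?x (fst q) * ?x (snd q))
      = 2 * (b + (real (card C) - 1) * y) * (real (card U) * y)"
  proof -
    have "w \<notin> C" "w \<notin> U" "p \<notin> U"
      using wp C(1) unfolding U_def by auto
    then show ?thesis
      using sum_symmetric_product_pairs[OF finite(2,3) \<open>C \<inter> U = {}\<close>]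
        sum_three_valued_pendant[OF finite(2) _ wp(2), of w "\<lambda>t. t"]
        sum_three_valued_other[of w U p "\<lambda>t. t"] by simp
  qed
  moreover have "real n = real (card S) + real (card C) + real (card U)"
  proof -
    have "V = S \<union> C \<union> U" "S \<inter> C = {}" "(S \<union> C) \<inter> U = {}"
      using S(1) C(1) unfolding U_def by auto
    then show ?thesis
      using G(3) finite by (simp add: card_Un_disjoint)
  qed
  moreover have "real (card S) \<ge> 1"
    using S(2) finite(1) by (simp add: Suc_le_eq card_gt_0_iff)
  ultimately have "2 * (real n - 2) * y * b < (\<Sum>q\<in>C \<times> U \<union> U \<times> C. ?x (fst q) * ?x (snd q))"
    using component_excess[of "real (card S)" "real (card C)" "real (card U)"] C(2) rest
    unfolding U_def by simp
  moreover have "w \<in> V" "p \<in> V" "w \<noteq> p"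
    using wp S(1) C(1) by auto
  ultimately show ?thesis
    using three_valued_beats_rho[OF G refl _ _ _ Q] by simp
qed

section \<open>Isolated vertices\<close>

text \<open>The copy of K_1 \<or> (K_{n-2} \<union> K_1) on V with dominating vertex w and pendant vertex p.\<close>

definition pendant_join :: "'a \<Rightarrow> 'a \<Rightarrow> 'a \<Rightarrow> 'a \<Rightarrow> bool" where
  "pendant_join w p u v \<longleftrightarrow>
     u \<noteq> v \<and> (u = w \<or> v = w \<or> (u \<notin> {w, p} \<and> v \<notin> {w, p}))"

lemma pendant_join_labelling:
  assumes "finite V" "card V = n" "w \<in> V" "p \<in> V" "w \<noteq> p"
  obtains \<phi> where "bij_betw \<phi> V {0..<n}" "\<And>u. u \<in> V \<Longrightarrow> \<phi> u = 0 \<longleftrightarrow> u = w"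
    "\<And>u. u \<in> V \<Longrightarrow> \<phi> u \<in> {1..n-2} \<longleftrightarrow> u \<notin> {w, p}"
proof -
  define R where "R = V - {w, p}"
  have "card R = card {1..n-2}"
    using assms unfolding R_def by (simp add: card_Diff_subset)
  then obtain g where g: "bij_betw g R {1..n-2}"
    using assms(1) finite_same_card_bij[of R "{1..n-2}"] unfolding R_def by auto
  have n: "n \<ge> 2"
    using assms card_mono[of V "{w, p}"] by auto
  define \<phi> where "\<phi> = g(w := 0, p := n - 1)"
  have "bij_betw \<phi> R {1..n-2}"
    using g unfolding \<phi>_def R_def by (rule bij_betw_cong[THEN iffD1, rotated]) auto
  moreover have "bij_betw \<phi> {w, p} {0, n - 1}"
    using assms(5) n unfolding \<phi>_def by (auto simp: bij_betw_def)
  ultimately have "bij_betw \<phi> (R \<union> {w, p}) ({1..n-2} \<union> {0, n - 1})"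
    using n by (intro bij_betw_combine) (auto simp: R_def)
  moreover have "R \<union> {w, p} = V" "{1..n-2} \<union> {0, n - 1} = {0..<n}"
    using assms(3,4) n unfolding R_def by auto
  moreover have "\<phi> u = 0 \<longleftrightarrow> u = w" "\<phi> u \<in> {1..n-2} \<longleftrightarrow> u \<notin> {w, p}"
    if "u \<in> V" for u
  proof -
    have "u \<in> R \<Longrightarrow> g u \<in> {1..n-2}"
      using bij_betw_apply[OF g] by blast
    then show "\<phi> u = 0 \<longleftrightarrow> u = w" "\<phi> u \<in> {1..n-2} \<longleftrightarrow> u \<notin> {w, p}"
      using that n assms(5) unfolding \<phi>_def R_def by auto
  qed
  ultimately show ?thesis
    using that by auto
qed

lemma graph_iso_pendant_join:
  assumes "finite V" "card V = n" "w \<in> V" "p \<in> V" "w \<noteq> p"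
    and E: "\<forall>u\<in>V. \<forall>v\<in>V. E u v \<longleftrightarrow> pendant_join w p u v"
  shows "graph_iso V E {0..<n} (special_graph n)"
proof -
  obtain \<phi> where bij: "bij_betw \<phi> V {0..<n}"
    and \<phi>_0: "\<And>u. u \<in> V \<Longrightarrow> \<phi> u = 0 \<longleftrightarrow> u = w"
    and \<phi>_mid: "\<And>u. u \<in> V \<Longrightarrow> \<phi> u \<in> {1..n-2} \<longleftrightarrow> u \<notin> {w, p}"
    using pendant_join_labelling[OF assms(1-5)] by blast
  have \<phi>_inj: "\<phi> u = \<phi> v \<longleftrightarrow> u = v" if "u \<in> V" "v \<in> V" for u v
    using bij that unfolding bij_betw_def inj_on_def by blast
  have "E u v \<longleftrightarrow> special_graph n (\<phi> u) (\<phi> v)" if "u \<in> V" "v \<in> V" for u v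
  proof -
    have "special_graph n (\<phi> u) (\<phi> v) \<longleftrightarrow> \<phi> u \<noteq> \<phi> v \<and>
        (\<phi> u = 0 \<or> \<phi> v = 0 \<or> (\<phi> u \<in> {1..n-2} \<and> \<phi> v \<in> {1..n-2}))"
      using bij_betw_apply[OF bij] that unfolding special_graph_def by auto
    also have "\<dots> \<longleftrightarrow> pendant_join w p u v"
      unfolding pendant_join_def
      by (simp only: \<phi>_0[OF that(1)] \<phi>_0[OF that(2)] \<phi>_mid[OF that(1)] \<phi>_mid[OF that(2)]
          \<phi>_inj[OF that])
    finally show ?thesis
      using E that by simp
  qed
  then show ?thesis
    unfolding graph_iso_def using bij by blast
qed

text \<open>A single isolated vertex p of G - w: G is a spanning subgraph of the copy of the
extremal graph with dominating vertex w and pendant vertex p, and a proper one unless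
G is isomorphic to it; a missing edge adds a further positive term.\<close>

lemma isolated_vertex_case:
  assumes G: "simple_graph V E" "connected_graph V E" "card V = n"
    and H: "perron_triple (real n) \<rho> a y b"
    and wp: "w \<in> V" "p \<in> V" "w \<noteq> p"
    and isolated: "\<forall>v\<in>V - {w}. \<not> E p v"
    and not_iso: "\<not> graph_iso V E {0..<n} (special_graph n)"
  shows "\<rho> < distance_spectral_radius V E"
proof -
  interpret perron_triple "real n" \<rho> a y b
    by (rule H)
  have fin: "finite V" and sym: "\<forall>u v. E u v \<longrightarrow> E v u"
    and loopless: "\<forall>u v. E u v \<longrightarrow> u \<noteq> v"
    using G(1) unfolding simple_graph_def by auto
  define R where "R = V - {w, p}"
  let ?x = "three_valued w p a b y"
  let ?f = "\<lambda>q. ?x (fst q) * ?x (snd q)"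
  define Q0 where "Q0 = {p} \<times> R \<union> R \<times> {p}"
  have Q0: "Q0 \<subseteq> non_edges V E"
    unfolding Q0_def using isolated wp unfolding R_def
    by (intro products_subset_non_edges[OF sym]) auto
  have "finite R" "{p} \<inter> R = {}" "card R = n - 2"
    using fin wp G(3) unfolding R_def by (auto simp: card_Diff_subset)
  then have sum_Q0: "(\<Sum>q\<in>Q0. ?f q) = 2 * (real n - 2) * y * b"
    using sum_symmetric_product_pairs[of "{p}" R ?x] sum_three_valued_other[of w R p "\<lambda>t. t" a b y]
      wp G(3) card_mono[OF fin, of "{w, p}"]
    unfolding Q0_def R_def by (simp add: three_valued_def of_nat_diff)
  have "E u v \<Longrightarrow> pendant_join w p u v" if "u \<in> V" "v \<in> V" for u v
    using isolated sym loopless that unfolding pendant_join_def by blast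
  then obtain c d where cd: "c \<in> V" "d \<in> V" "pendant_join w p c d" "\<not> E c d"
    using not_iso graph_iso_pendant_join[OF fin G(3) wp, of E] by blast
  have "c \<noteq> d" "\<not> E d c"
    using cd sym unfolding pendant_join_def by auto
  have "(c, d) \<notin> Q0" "(d, c) \<notin> Q0"
    using cd(3) wp(3) unfolding Q0_def R_def pendant_join_def by auto
  define Q where "Q = insert (c, d) (insert (d, c) Q0)"
  have "Q \<subseteq> non_edges V E"
    using Q0 cd \<open>c \<noteq> d\<close> \<open>\<not> E d c\<close> unfolding Q_def non_edges_def by auto
  moreover have "finite Q0"
    using Q0 fin finite_subset[of Q0 "V \<times> V"] unfolding non_edges_def by auto
  then have "(\<Sum>q\<in>Q. ?f q) = ?f (c, d) + ?f (d, c) + (\<Sum>q\<in>Q0. ?f q)"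
    using \<open>(c, d) \<notin> Q0\<close> \<open>(d, c) \<notin> Q0\<close> \<open>c \<noteq> d\<close> unfolding Q_def by simp
  moreover have "?f (c, d) > 0" "?f (d, c) > 0"
    using pos unfolding three_valued_def by auto
  ultimately show ?thesis
    using three_valued_beats_rho[OF G refl wp] sum_Q0 by simp
qed

lemma isolated_set_non_edges:
  assumes "simple_graph V E" "I \<subseteq> V - S" "\<forall>u\<in>I. \<forall>v\<in>V - S. \<not> E u v"
  shows "(I \<times> I - Id) \<union> (I \<times> (V - S - I) \<union> (V - S - I) \<times> I) \<subseteq> non_edges V E"
proof -
  have "\<forall>u v. E u v \<longrightarrow> E v u"
    using assms(1) unfolding simple_graph_def by blast
  then have "I \<times> (V - S - I) \<union> (V - S - I) \<times> I \<subseteq> non_edges V E"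
    using assms(2,3) by (intro products_subset_non_edges) auto
  moreover have "I \<times> I - Id \<subseteq> non_edges V E"
    using assms(2,3) unfolding non_edges_def by auto
  ultimately show ?thesis
    by blast
qed

lemma sum_isolated_set_pairs:
  assumes "finite I" "finite R" "I \<inter> R = {}"
  shows "(\<Sum>q\<in>(I \<times> I - Id) \<union> (I \<times> R \<union> R \<times> I). x (fst q) * x (snd q))
    = (\<Sum>v\<in>I. x v)\<^sup>2 - (\<Sum>v\<in>I. (x v)\<^sup>2) + 2 * (\<Sum>v\<in>I. x v) * (\<Sum>v\<in>R. x v :: real)"
proof -
  have "(I \<times> I - Id) \<inter> (I \<times> R \<union> R \<times> I) = {}"
    using assms(3) by auto
  then show ?thesis
    using assms sum_offdiagonal_products[OF assms(1), of x] sum_symmetric_product_pairs[OF assms, of x]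
    by (simp add: sum.union_disjoint)
qed

lemma isolated_set_case_large:
  assumes G: "simple_graph V E" "connected_graph V E" "card V = n" "odd n" "n \<ge> 7"
    and H: "perron_triple (real n) \<rho> a y b"
    and S: "S \<subseteq> V" "card S \<ge> 2" and I: "I \<subseteq> V - S" "card I = card S"
    and isolated: "\<forall>u\<in>I. \<forall>v\<in>V - S. \<not> E u v"
  shows "\<rho> < distance_spectral_radius V E"
proof -
  interpret perron_triple "real n" \<rho> a y b
    by (rule H)
  have fin: "finite V"
    using G(1) unfolding simple_graph_def by simp
  define s where "s = card S"
  define R where "R = V - S - I"
  obtain w p where wp: "w \<in> S" "p \<in> I"
    using S(2) I(2) by (metis card.empty ex_in_conv not_numeral_le_zero)
  let ?x = "three_valued w p a b y"
  have finite: "finite S" "finite I" "finite R"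
    using fin S(1) I(1) unfolding R_def by (auto intro: finite_subset)
  have "I \<inter> R = {}" "w \<notin> I" "w \<notin> R" "p \<notin> R"
    using wp I(1) unfolding R_def by auto
  have card_R: "card R = n - 2 * s" and "2 * s \<le> n"
    using G(3) S(1) I fin finite card_mono[OF _ I(1)]
    unfolding R_def s_def by (auto simp: card_Diff_subset)
  then have "2 * s + 1 \<le> n"
    using G(4) by presburger
  then have "2 * real s \<le> real n - 1"
    using of_nat_mono[where 'a = real] by fastforce
  then have "2 * (real n - 2) * y * b
      < (\<Sum>q\<in>(I \<times> I - Id) \<union> (I \<times> R \<union> R \<times> I). ?x (fst q) * ?x (snd q))"
    using independent_set_excess[of "real s"] G(5) S(2) \<open>2 * s \<le> n\<close>
      sum_isolated_set_pairs[OF finite(2,3) \<open>I \<inter> R = {}\<close>, of ?x]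
      sum_three_valued_pendant[OF finite(2) \<open>w \<notin> I\<close> wp(2), of "\<lambda>t. t"]
      sum_three_valued_pendant[OF finite(2) \<open>w \<notin> I\<close> wp(2), of "\<lambda>t. t\<^sup>2"]
      sum_three_valued_other[OF \<open>w \<notin> R\<close> \<open>p \<notin> R\<close>, of "\<lambda>t. t"]
    unfolding card_R I(2) s_def[symmetric] by (simp add: of_nat_diff)
  moreover have "w \<in> V" "p \<in> V" "w \<noteq> p"
    using wp S(1) I(1) by auto
  ultimately show ?thesis
    using three_valued_beats_rho[OF G(1-3) refl _ _ _ isolated_set_non_edges[OF G(1) I(1) isolated]]
    unfolding R_def by simp
qed

text \<open>For n = 5 and two isolated vertices the transplanted Perron vector of the extremal
graph is not good enough; the vector that is 1 on S and 3/2 elsewhere is.\<close>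

lemma isolated_pair_case_order_5:
  assumes G: "simple_graph V E" "connected_graph V E" "card V = 5"
    and H: "perron_triple 5 \<rho> a y b"
    and S: "S \<subseteq> V" "card S = 2" and I: "I \<subseteq> V - S" "card I = 2"
    and isolated: "\<forall>u\<in>I. \<forall>v\<in>V - S. \<not> E u v"
  shows "\<rho> < distance_spectral_radius V E"
proof -
  have fin: "finite V"
    using G(1) unfolding simple_graph_def by simp
  define R where "R = V - S - I"
  define z :: "'a \<Rightarrow> real" where "z = (\<lambda>v. if v \<in> S then 1 else 3 / 2)"
  have finite: "finite S" "finite I" "finite R"
    using fin S(1) I(1) unfolding R_def by (auto intro: finite_subset)
  have "card (V - S) = 3" "card R = 1" "I \<inter> R = {}"
    using G(3) S I fin finite unfolding R_def by (auto simp: card_Diff_subset)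
  have sum_outside: "(\<Sum>v\<in>A. f (z v)) = real (card A) * f (3 / 2)"
    if "A \<inter> S = {}" for A and f :: "real \<Rightarrow> real"
    using that unfolding z_def by (subst sum.cong[OF refl, of _ _ "\<lambda>_. f (3 / 2)"]) auto
  have sum_S: "(\<Sum>v\<in>S. f (z v)) = 2 * f 1" for f :: "real \<Rightarrow> real"
    using S(2) unfolding z_def by simp
  have sum_V: "(\<Sum>v\<in>V. f (z v)) = 2 * f 1 + 3 * f (3 / 2)" for f :: "real \<Rightarrow> real"
    using sum.subset_diff[OF S(1) fin, of "\<lambda>v. f (z v)"] sum_S[of f] sum_outside[of "V - S" f]
      \<open>card (V - S) = 3\<close> by auto
  have "I \<inter> S = {}" "R \<inter> S = {}"
    using I(1) unfolding R_def by auto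
  then have "(\<Sum>v\<in>I. z v) = 3" "(\<Sum>v\<in>I. (z v)\<^sup>2) = 9 / 2" "(\<Sum>v\<in>R. z v) = 3 / 2"
    using sum_outside[of I "\<lambda>t. t"] sum_outside[of I "\<lambda>t. t\<^sup>2"] sum_outside[of R "\<lambda>t. t"]
      I(2) \<open>card R = 1\<close> by (simp_all add: power2_eq_square)
  then have "(\<Sum>q\<in>(I \<times> I - Id) \<union> (I \<times> R \<union> R \<times> I). z (fst q) * z (snd q)) = 27 / 2"
    using sum_isolated_set_pairs[OF finite(2,3) \<open>I \<inter> R = {}\<close>, of z] by (simp add: power2_eq_square)
  moreover have norm: "sq_norm V z = 35 / 4"
    using sum_V[of "\<lambda>t. t\<^sup>2"] unfolding sq_norm_def by (simp add: power2_eq_square)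
  moreover have z_nonneg: "\<forall>v. z v \<ge> 0"
    unfolding z_def by simp
  ultimately have "47 \<le> quad_form V (dist_matrix V E) z"
    using quad_form_dist_matrix_ge[OF G(1,2) z_nonneg
        isolated_set_non_edges[OF G(1) I(1) isolated, folded R_def]] sum_V[of "\<lambda>t. t"]
    by (simp add: power2_eq_square)
  moreover have "\<rho> * sq_norm V z < 47"
    using perron_triple.rho_bound_order_5[OF H] unfolding norm by simp
  ultimately have "\<rho> * sq_norm V z < quad_form V (dist_matrix V E) z"
    by linarith
  then show ?thesis
    using spectral_radius_gt_of_rayleigh[OF G(1)] G(3) by fastforce
qed

lemma isolated_set_case:
  assumes G: "simple_graph V E" "connected_graph V E" "card V = n" "odd n"
    and H: "perron_triple (real n) \<rho> a y b"
    and S: "S \<subseteq> V" "S \<noteq> {}" and I: "I \<subseteq> V - S" "card I = card S"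
    and isolated: "\<forall>u\<in>I. \<forall>v\<in>V - S. \<not> E u v"
    and not_iso: "\<not> graph_iso V E {0..<n} (special_graph n)"
  shows "\<rho> < distance_spectral_radius V E"
proof -
  have fin: "finite V"
    using G(1) unfolding simple_graph_def by simp
  have "card S \<ge> 1"
    using S fin by (simp add: Suc_le_eq card_gt_0_iff finite_subset)
  moreover have "card S + card I \<le> n"
  proof -
    have "S \<inter> I = {}" "S \<union> I \<subseteq> V" "finite S" "finite I"
      using S(1) I(1) fin by (auto intro: finite_subset)
    then show ?thesis
      using G(3) fin card_Un_disjoint[of S I] card_mono[of V "S \<union> I"] by simp
  qed
  ultimately have "card S = 1 \<or> (card S \<ge> 2 \<and> n \<ge> 7) \<or> (card S = 2 \<and> n = 5)"
    using I(2) G(4) by presburger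
  then consider "card S = 1" | "card S \<ge> 2" "n \<ge> 7" | "card S = 2" "n = 5"
    by blast
  then show ?thesis
  proof cases
    case 1
    then obtain w p where "S = {w}" "I = {p}"
      using I(2) by (metis card_1_singletonE)
    then show ?thesis
      using isolated_vertex_case[OF G(1-3) H, of w p] S(1) I(1) isolated not_iso by auto
  next
    case 2
    then show ?thesis
      using isolated_set_case_large[OF G _ H S(1) _ I isolated] by simp
  next
    case 3
    then show ?thesis
      using isolated_pair_case_order_5[OF G(1,2) _ _ S(1) _ I(1) _ isolated] G(3) H I(2) by simp
  qed
qed

section \<open>Barriers\<close>

lemma simple_graph_del_vertices:
  "simple_graph V E \<Longrightarrow> simple_graph (V - S) (del_vertices E S)"
  unfolding simple_graph_def del_vertices_def by auto

lemma bt_value_empty: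
  assumes "connected_graph V E" "odd k" "odd (card V)" "card V \<ge> 3"
  shows "bt_value k V E {} = 1"
proof -
  have "del_vertices E {} = E"
    unfolding del_vertices_def by (simp add: fun_eq_iff)
  moreover have "{C \<in> {V}. odd (card C) \<and> 3 \<le> card C} = {V}" "{C \<in> {V}. card C = 1} = {}"
    using assms(3,4) by auto
  ultimately show ?thesis
    using assms(2) components_connected[OF assms(1)]
    unfolding bt_value_def num_odd_nontrivial_def num_isolated_def by simp
qed

lemma not_GFC_imp_barrier:
  assumes "finite V" "connected_graph V E" "odd k" "odd (card V)" "card V \<ge> 3" "\<not> GFC k V E"
  obtains S where "S \<subseteq> V" "S \<noteq> {}" "bt_value k V E S \<ge> 1"
proof -
  obtain S where "S \<noteq> {}" "S \<subseteq> V" "bt_value k V E S = def_k k V E"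
    using assms(2,4,6) unfolding GFC_def k_barrier_def by blast
  moreover have "bt_value k V E {} \<le> def_k k V E"
    unfolding def_k_def using assms(1) by (intro Max_ge) auto
  ultimately show ?thesis
    using that bt_value_empty[OF assms(2-5)] by simp
qed

lemma isolated_set_of_num_isolated:
  assumes "simple_graph W F" "s \<le> num_isolated W F"
  obtains I where "I \<subseteq> W" "card I = s" "\<forall>u\<in>I. \<forall>v. \<not> F u v"
proof -
  have fin: "finite W" and sym: "\<forall>u v. F u v \<longrightarrow> F v u"
    and F: "\<forall>u v. F u v \<longrightarrow> u \<in> W \<and> v \<in> W \<and> u \<noteq> v"
    using assms(1) unfolding simple_graph_def by auto
  define singletons where "singletons = {C \<in> Defs.components W F. card C = 1}"
  have "s \<le> card singletons"
    using assms(2) unfolding num_isolated_def singletons_def .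
  then obtain \<C> where \<C>: "\<C> \<subseteq> singletons" "card \<C> = s"
    by (rule obtain_subset_with_card_n)
  have "card (\<Union>\<C>) = sum card \<C>"
    using card_Union_components[OF assms(1)] \<C>(1) unfolding singletons_def by blast
  also have "\<dots> = s"
    using \<C> unfolding singletons_def by (simp add: subset_iff)
  finally have "card (\<Union>\<C>) = s" .
  moreover have "\<Union>\<C> \<subseteq> W"
    using \<C>(1) components_subset unfolding singletons_def by blast
  moreover have "\<not> F u v" if u: "u \<in> \<Union>\<C>" for u v
  proof
    assume "F u v"
    obtain C where C: "C \<in> Defs.components W F" "card C = 1" "u \<in> C"
      using u \<C>(1) unfolding singletons_def by blast
    have "v \<in> C"
      using component_edge_closed[OF _ C(1,3) \<open>F u v\<close>] F by blast
    moreover have "u \<noteq> v"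
      using F \<open>F u v\<close> by blast
    ultimately show False
      using C(2,3) card_1_singletonE by blast
  qed
  ultimately show ?thesis
    using that by blast
qed

lemma odd_component_of_num_odd_nontrivial:
  assumes "simple_graph W F" "num_odd_nontrivial W F \<ge> 1"
  obtains C where "C \<subseteq> W" "card C \<ge> 3" "\<forall>u\<in>C. \<forall>v\<in>W - C. \<not> F u v"
    "num_odd_nontrivial W F + num_isolated W F - 1 \<le> card (W - C)"
proof -
  have fin: "finite W"
    using assms(1) unfolding simple_graph_def by auto
  define odds where "odds = {C \<in> Defs.components W F. odd (card C) \<and> card C \<ge> 3}"
  define singletons where "singletons = {C \<in> Defs.components W F. card C = 1}"
  have "odds \<noteq> {}"
    using assms(2) unfolding num_odd_nontrivial_def odds_def[symmetric] by auto
  then obtain C where C: "C \<in> odds"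
    by blast
  then have C_comp: "C \<in> Defs.components W F" and "card C \<ge> 3"
    unfolding odds_def by auto
  define others where "others = (odds \<union> singletons) - {C}"
  have others: "others \<subseteq> Defs.components W F - {C}"
    unfolding others_def odds_def singletons_def by auto
  have "finite odds" "finite singletons" "odds \<inter> singletons = {}"
    using finite_components[OF fin] unfolding odds_def singletons_def by auto
  then have "num_odd_nontrivial W F + num_isolated W F - 1 = card others"
    unfolding others_def num_odd_nontrivial_def num_isolated_def odds_def[symmetric]
      singletons_def[symmetric]
    using C by (simp add: card_Un_disjoint)
  also have "\<dots> \<le> card (\<Union>others)"
    using card_le_card_Union_components[OF assms(1)] others by blast
  also have "\<dots> \<le> card (W - C)"
    using Union_other_components_subset[OF assms(1) C_comp others] fin by (intro card_mono) auto
  finally show ?thesis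
    using that components_subset[OF C_comp] \<open>card C \<ge> 3\<close> component_no_edge_out[OF assms(1) C_comp]
    by blast
qed

lemma bt_value_ge_1_components:
  assumes "odd k" "k \<ge> 3" "bt_value k V E S \<ge> 1"
    and "num_isolated (V - S) (del_vertices E S) < card S"
  shows "card S + 2
    \<le> num_odd_nontrivial (V - S) (del_vertices E S) + num_isolated (V - S) (del_vertices E S)"
proof -
  define q i s where "q = num_odd_nontrivial (V - S) (del_vertices E S)"
    "i = num_isolated (V - S) (del_vertices E S)" "s = card S"
  have "1 \<le> int q + int k * int i - int k * int s"
    using assms(1,3) unfolding bt_value_def q_i_s_def by simp
  moreover have "3 * (int s - int i) \<le> int k * (int s - int i)"
    using assms(2,4) unfolding q_i_s_def by (intro mult_right_mono) auto
  ultimately show ?thesis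
    using assms(4) unfolding q_i_s_def[symmetric] by (simp add: algebra_simps)
qed

lemma spectral_radius_gt_of_barrier:
  assumes G: "simple_graph V E" "connected_graph V E" "card V = n" "odd n"
    and k: "odd k" "k \<ge> 3"
    and H: "perron_triple (real n) \<rho> a y b"
    and S: "S \<subseteq> V" "S \<noteq> {}" "bt_value k V E S \<ge> 1"
    and not_iso: "\<not> graph_iso V E {0..<n} (special_graph n)"
  shows "\<rho> < distance_spectral_radius V E"
proof -
  let ?F = "del_vertices E S"
  have G': "simple_graph (V - S) ?F"
    by (rule simple_graph_del_vertices[OF G(1)])
  have E: "\<not> E u v" if "u \<in> V - S" "v \<in> V - S" "\<not> ?F u v" for u v
    using that unfolding del_vertices_def by blast
  show ?thesis
  proof (cases "card S \<le> num_isolated (V - S) ?F")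
    case True
    then obtain I where I: "I \<subseteq> V - S" "card I = card S" "\<forall>u\<in>I. \<forall>v. \<not> ?F u v"
      by (rule isolated_set_of_num_isolated[OF G'])
    then have "\<forall>u\<in>I. \<forall>v\<in>V - S. \<not> E u v"
      using E by blast
    then show ?thesis
      by (rule isolated_set_case[OF G H S(1,2) I(1,2) _ not_iso])
  next
    case False
    then have many: "card S + 2 \<le> num_odd_nontrivial (V - S) ?F + num_isolated (V - S) ?F"
      using bt_value_ge_1_components[OF k S(3)] by simp
    then have "num_odd_nontrivial (V - S) ?F \<ge> 1"
      using False by linarith
    then obtain C where C: "C \<subseteq> V - S" "card C \<ge> 3" "\<forall>u\<in>C. \<forall>v\<in>V - S - C. \<not> ?F u v"
      "num_odd_nontrivial (V - S) ?F + num_isolated (V - S) ?F - 1 \<le> card (V - S - C)"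
      by (rule odd_component_of_num_odd_nontrivial[OF G'])
    have "\<forall>u\<in>C. \<forall>v\<in>V - S - C. \<not> E u v"
      using C(1,3) E by blast
    moreover have "card S + 1 \<le> card (V - S - C)"
      using many C(4) by linarith
    ultimately show ?thesis
      by (rule odd_component_case[OF G(1-3) H S(1,2) C(1,2)])
  qed
qed

theorem theorem3:
  fixes V :: "'a set" and E :: "'a \<Rightarrow> 'a \<Rightarrow> bool" and k n :: nat
  assumes "odd k" and "k \<ge> 3" and "odd n" and "n \<ge> 3"
    and "simple_graph V E" and "connected_graph V E" and "card V = n"
    and "distance_spectral_radius V E \<le> distance_spectral_radius {0..<n} (special_graph n)"
    and "\<not> graph_iso V E {0..<n} (special_graph n)"
  shows "GFC k V E"
proof (rule ccontr)
  assume "\<not> GFC k V E"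
  moreover have "finite V"
    using assms(5) unfolding simple_graph_def by simp
  ultimately obtain S where "S \<subseteq> V" "S \<noteq> {}" "bt_value k V E S \<ge> 1"
    using not_GFC_imp_barrier[of V E k] assms(1,3,4,6,7) by auto
  moreover obtain a y b where
    "perron_triple (real n) (distance_spectral_radius {0..<n} (special_graph n)) a y b"
    using special_graph_perron_triple[OF assms(4)] by blast
  ultimately have "distance_spectral_radius {0..<n} (special_graph n) < distance_spectral_radius V E"
    using spectral_radius_gt_of_barrier assms(1-3,5-7,9) by blast
  with assms(8) show False
    by simp
qed

end
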